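(* Let $(\Sigma,\Lambda,\rho,\tau)$ be an orthodiagonal discrete M-curve of genus $g$ (i.e. $\rho_Q\in\mathbb R_{>0}$ for all faces and there are $g+1$ discrete real ovals), and let the blocks of the complete discrete period matrix be taken with respect to a symplectic basis $(a_i,b_i)$ of $H_1(\Sigma,\mathbb Z)$ with $\tau(a_i)=a_i$ and $\tau(b_i)=-b_i$ for all $i$. (i) If $\tau$ is of Type 1, then $\Pi^{B,B}=0=\Pi^{W,W}$, and the complete discrete period matrix $\tilde\Pi$ is purely imaginary. (ii) If $\tau$ is of Type 2, then $\Pi^{B,B}=-\Pi^{W,W}$ and $\Pi^{W,B}=\Pi^{B,W}$; moreover $\Pi^{B,B}$ is a real skew-symmetric matrix and $\Pi^{W,B}=\Pi^{B,W}$ is a purely imaginary symmetric matrix.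
   Context: A discrete Riemann surface $(\Sigma,\Lambda,\rho)$ consists of a compact connected oriented surface $\Sigma$ of genus $g$, a finite strongly regular cellular decomposition $\Lambda$ of $\Sigma$ into quadrilaterals whose 1-skeleton is bipartite with a fixed black/white vertex coloring, and $\rho:F(\Lambda)\to\{z\in\mathbb C:\Re z>0\}$. For a face $Q$ its vertices in counterclockwise order are $b_-,w_-,b_+,w_+$ ($b_\pm$ black, $w_\pm$ white). A discrete antiholomorphic involution is a bijection $\tau:V(\Lambda)\to V(\Lambda)$ with $\tau\circ\tau=\mathrm{id}$, a graph automorphism mapping faces to faces and reversing orientation, and either Type 1: $\tau$ preserves colors and $\rho_{\tau(Q)}=\overline{\rho_Q}$, or Type 2: $\tau$ swaps colors and $\rho_{\tau(Q)}=1/\overline{\rho_Q}$, for all faces $Q$. Then $(\Sigma,\Lambda,\rho,\tau)$ is a discrete real Riemann surface; $\tau$ acts on $H_1(\Sigma,\mathbb Z)$. The fixed point set $\mathrm{fix}(\tau)$ (in the realization of $\Sigma$ by unit squares, one per face) is, in Type 1, the union of fixed vertices, edges mapped to themselves, and for each face $Q=\tau(Q)$ the diagonal joining its two fixed vertices; in Type 2, the union of midpoints of edges mapped to themselves and, for each face $Q=\tau(Q)$, the segment joining the midpoints of the two edges of $Q$ mapped to themselves. Its connected components are the discrete real ovals; a discrete M-curve has $g+1$ of them. A symplectic basis satisfies $\mathrm{int}(a_i,a_j)=0=\mathrm{int}(b_i,b_j)$, $\mathrm{int}(a_i,b_j)=\delta_{ij}$. Medial graph $X$: vertices are midpoints of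 edges of $\Lambda$, adjacent iff the edges share a vertex and lie in a common face; each face $Q$ contains a 4-cycle $F_Q$ of $X$; the edge joining midpoints of $uv$ and $vw$ in $Q$ is black if $u,w$ black, white if $u,w$ white. A discrete one-form is a function $\omega$ on oriented edges of $X$ with $\omega(-e)=-\omega(e)$; type $\Diamond$ means equal values on the two black edges of each $F_Q$ oriented from the $b_-$ side to the $b_+$ side, and likewise for white edges from $w_-$ toward $w_+$; closed means zero sum around each face of $X$ (the cycles $F_Q$ and the cycles $F_v$ around vertices $v$). For $f$ on vertices of $Q$, $df(e)=(f(w)-f(u))/2$ for the edge $e$ from midpoint of $uv$ to midpoint of $vw$; $f$ is discrete holomorphic on $Q$ if $f(w_+)-f(w_-)=i\rho_Q(f(b_+)-f(b_-))$. A discrete holomorphic differential is a closed type-$\Diamond$ one-form that on each $F_Q$ equals $df$ for some $f$ discrete holomorphic on $Q$. For a closed path $P$ on $X$, $BP$/$WP$ are its oriented black/white edges. Known fact: discrete holomorphic differentials are uniquely determined by arbitrary prescribed black and white $a$-periods $2\int_{B\alpha_k}\omega$, $2\int_{W\alpha_k}\omega$. With paths $\alpha_k,\beta_k$ on $X$ representing $a_k,b_k$: $\omega^B_k$ has black $a_j$-periods $\delta_{jk}$ and zero white $a$-periods, $\omega^W_k$ has white $a_j$-periods $\delta_{jk}$ and zero black ones; $\Pi^{B,B}_{jk}=2\int_{B\beta_j}\omega^B_k$, $\Pi^{W,B}_{jk}=2\int_{W\beta_j}\omega^B_k$, $\Pi^{B,W}_{jk}=2\int_{B\beta_j}\omega^W_k$,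 $\Pi^{W,W}_{jk}=2\int_{W\beta_j}\omega^W_k$, $\tilde\Pi=\begin{pmatrix}\Pi^{B,W}&\Pi^{B,B}\\ \Pi^{W,W}&\Pi^{W,B}\end{pmatrix}$. Known facts: $\tilde\Pi$ is symmetric; in the orthodiagonal case $\Pi^{W,B},\Pi^{B,W}$ are purely imaginary and $\Pi^{B,B},\Pi^{W,W}$ are real. *)

theory Defs
  imports Complex_Main
begin

section \<open>Combinatorial model of a discrete Riemann surface (quad decomposition)\<close>

text \<open>A face Q is given by its four corners c Q 0, c Q 1, c Q 2, c Q 3 in counterclockwise
order, namely b_-, w_-, b_+, w_+. Indices are read modulo 4.\<close>

definition crn :: "('f \<Rightarrow> nat \<Rightarrow> 'v) \<Rightarrow> 'f \<Rightarrow> nat \<Rightarrow> 'v" where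
  "crn c Q i = c Q (i mod 4)"

definition corners :: "('f \<Rightarrow> nat \<Rightarrow> 'v) \<Rightarrow> 'f \<Rightarrow> 'v set" where
  "corners c Q = crn c Q ` {..<4}"

definition lam_edges :: "'f set \<Rightarrow> ('f \<Rightarrow> nat \<Rightarrow> 'v) \<Rightarrow> 'v set set" where
  "lam_edges F c = {{crn c Q i, crn c Q (Suc i)} | Q i. Q \<in> F \<and> i < (4::nat)}"

text \<open>Corners (flags) at a vertex and the rotation relation between consecutive faces around it.\<close>
definition flags_at :: "'f set \<Rightarrow> ('f \<Rightarrow> nat \<Rightarrow> 'v) \<Rightarrow> 'v \<Rightarrow> ('f \<times> nat) set" where
  "flags_at F c v = {(Q, i). Q \<in> F \<and> i < 4 \<and> crn c Q i = v}"

definition rot_rel :: "'f set \<Rightarrow> ('f \<Rightarrow> nat \<Rightarrow> 'v) \<Rightarrow> 'v \<Rightarrow> (('f \<times> nat) \<times> ('f \<times> nat)) set" where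
  "rot_rel F c v = {((Q, i), (Q', j)). (Q, i) \<in> flags_at F c v \<and> (Q', j) \<in> flags_at F c v \<and>
                       crn c Q' (Suc j) = crn c Q (i + 3)}"

text \<open>Finite strongly regular cellular decomposition of a compact connected oriented surface
into quadrilaterals with bipartite 1-skeleton and black/white colouring.\<close>
definition quad_surface :: "'v set \<Rightarrow> 'f set \<Rightarrow> ('f \<Rightarrow> nat \<Rightarrow> 'v) \<Rightarrow> ('v \<Rightarrow> bool) \<Rightarrow> bool" where
  "quad_surface V F c black \<longleftrightarrow>
     finite V \<and> finite F \<and> F \<noteq> {} \<and>
     (\<forall>Q\<in>F. \<forall>i<4. c Q i \<in> V) \<and>
     (\<forall>Q\<in>F. inj_on (c Q) {..<4}) \<and>
     (\<forall>Q\<in>F. black (c Q 0) \<and> \<not> black (c Q 1) \<and> black (c Q 2) \<and> \<not> black (c Q 3)) \<and>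
     \<comment> \<open>each oriented edge bounds exactly one face on its left ...\<close>
     (\<forall>Q\<in>F. \<forall>Q'\<in>F. \<forall>i<4. \<forall>j<4.
        crn c Q i = crn c Q' j \<and> crn c Q (Suc i) = crn c Q' (Suc j) \<longrightarrow> Q = Q' \<and> i = j) \<and>
     \<comment> \<open>... and its reverse bounds a face too (closed oriented surface)\<close>
     (\<forall>Q\<in>F. \<forall>i<4. \<exists>Q'\<in>F. \<exists>j<4. crn c Q' j = crn c Q (Suc i) \<and> crn c Q' (Suc j) = crn c Q i) \<and>
     (\<forall>v\<in>V. flags_at F c v \<noteq> {}) \<and>
     \<comment> \<open>vertex links are single cycles (manifold condition)\<close>
     (\<forall>v\<in>V. \<forall>x\<in>flags_at F c v. \<forall>y\<in>flags_at F c v. (x, y) \<in> (rot_rel F c v)\<^sup>*) \<and>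
     \<comment> \<open>strong regularity: two distinct faces meet in nothing, a vertex, or an edge\<close>
     (\<forall>Q\<in>F. \<forall>Q'\<in>F. Q \<noteq> Q' \<longrightarrow>
        corners c Q \<inter> corners c Q' = {} \<or> (\<exists>v. corners c Q \<inter> corners c Q' = {v}) \<or>
        (\<exists>i<4. corners c Q \<inter> corners c Q' = {crn c Q i, crn c Q (Suc i)})) \<and>
     \<comment> \<open>connectedness\<close>
     (\<forall>u\<in>V. \<forall>w\<in>V. (u, w) \<in> {(x, y). {x, y} \<in> lam_edges F c}\<^sup>*)"

definition discrete_riemann_surface ::
  "'v set \<Rightarrow> 'f set \<Rightarrow> ('f \<Rightarrow> nat \<Rightarrow> 'v) \<Rightarrow> ('v \<Rightarrow> bool) \<Rightarrow> ('f \<Rightarrow> complex) \<Rightarrow> bool" where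
  "discrete_riemann_surface V F c black rho \<longleftrightarrow>
     quad_surface V F c black \<and> (\<forall>Q\<in>F. Re (rho Q) > 0)"

definition has_genus :: "'v set \<Rightarrow> 'f set \<Rightarrow> ('f \<Rightarrow> nat \<Rightarrow> 'v) \<Rightarrow> nat \<Rightarrow> bool" where
  "has_genus V F c g \<longleftrightarrow>
     int (card V) - int (card (lam_edges F c)) + int (card F) = 2 - 2 * int g"

definition orthodiagonal :: "'f set \<Rightarrow> ('f \<Rightarrow> complex) \<Rightarrow> bool" where
  "orthodiagonal F rho \<longleftrightarrow> (\<forall>Q\<in>F. rho Q \<in> \<real>)"

definition is_type1 :: "'v set \<Rightarrow> 'f set \<Rightarrow> ('f \<Rightarrow> nat \<Rightarrow> 'v) \<Rightarrow> ('v \<Rightarrow> bool) \<Rightarrow> ('f \<Rightarrow> complex)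
    \<Rightarrow> ('v \<Rightarrow> 'v) \<Rightarrow> bool" where
  "is_type1 V F c black rho tau \<longleftrightarrow>
     (\<forall>v\<in>V. black (tau v) = black v) \<and>
     (\<forall>Q\<in>F. \<forall>Q'\<in>F. tau ` corners c Q = corners c Q' \<longrightarrow> rho Q' = cnj (rho Q))"

definition is_type2 :: "'v set \<Rightarrow> 'f set \<Rightarrow> ('f \<Rightarrow> nat \<Rightarrow> 'v) \<Rightarrow> ('v \<Rightarrow> bool) \<Rightarrow> ('f \<Rightarrow> complex)
    \<Rightarrow> ('v \<Rightarrow> 'v) \<Rightarrow> bool" where
  "is_type2 V F c black rho tau \<longleftrightarrow>
     (\<forall>v\<in>V. black (tau v) = (\<not> black v)) \<and>
     (\<forall>Q\<in>F. \<forall>Q'\<in>F. tau ` corners c Q = corners c Q' \<longrightarrow> rho Q' = 1 / cnj (rho Q))"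

text \<open>An involutive graph automorphism of V mapping faces to faces with reversed cyclic order.\<close>
definition antihol_involution :: "'v set \<Rightarrow> 'f set \<Rightarrow> ('f \<Rightarrow> nat \<Rightarrow> 'v) \<Rightarrow> ('v \<Rightarrow> bool)
    \<Rightarrow> ('f \<Rightarrow> complex) \<Rightarrow> ('v \<Rightarrow> 'v) \<Rightarrow> bool" where
  "antihol_involution V F c black rho tau \<longleftrightarrow>
     (\<forall>v\<in>V. tau v \<in> V \<and> tau (tau v) = v) \<and>
     (\<forall>Q\<in>F. \<exists>Q'\<in>F. \<exists>k<4. \<forall>i<4. tau (crn c Q i) = crn c Q' (k + 4 - i)) \<and>
     (is_type1 V F c black rho tau \<or> is_type2 V F c black rho tau)"

section \<open>Discrete real ovals (components of the fixed point set)\<close>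

definition fix_nodes1 :: "'v set \<Rightarrow> ('v \<Rightarrow> 'v) \<Rightarrow> 'v set" where
  "fix_nodes1 V tau = {v \<in> V. tau v = v}"

definition fix_adj1 :: "'v set \<Rightarrow> 'f set \<Rightarrow> ('f \<Rightarrow> nat \<Rightarrow> 'v) \<Rightarrow> ('v \<Rightarrow> 'v) \<Rightarrow> ('v \<times> 'v) set" where
  "fix_adj1 V F c tau = {(u, w). u \<in> fix_nodes1 V tau \<and> w \<in> fix_nodes1 V tau \<and>
      ({u, w} \<in> lam_edges F c \<or>
       (\<exists>Q\<in>F. tau ` corners c Q = corners c Q \<and> u \<in> corners c Q \<and> w \<in> corners c Q))}"

text \<open>Type 2: invariant edges (their midpoints), joined through invariant faces.\<close>
definition fix_nodes2 :: "'f set \<Rightarrow> ('f \<Rightarrow> nat \<Rightarrow> 'v) \<Rightarrow> ('v \<Rightarrow> 'v) \<Rightarrow> 'v set set" where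
  "fix_nodes2 F c tau = {e \<in> lam_edges F c. tau ` e = e}"

definition fix_adj2 :: "'f set \<Rightarrow> ('f \<Rightarrow> nat \<Rightarrow> 'v) \<Rightarrow> ('v \<Rightarrow> 'v) \<Rightarrow> ('v set \<times> 'v set) set" where
  "fix_adj2 F c tau = {(e1, e2). e1 \<in> fix_nodes2 F c tau \<and> e2 \<in> fix_nodes2 F c tau \<and>
      (\<exists>Q\<in>F. tau ` corners c Q = corners c Q \<and> e1 \<subseteq> corners c Q \<and> e2 \<subseteq> corners c Q)}"

definition num_real_ovals :: "'v set \<Rightarrow> 'f set \<Rightarrow> ('f \<Rightarrow> nat \<Rightarrow> 'v) \<Rightarrow> ('v \<Rightarrow> bool)
    \<Rightarrow> ('f \<Rightarrow> complex) \<Rightarrow> ('v \<Rightarrow> 'v) \<Rightarrow> nat" where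
  "num_real_ovals V F c black rho tau =
     (if is_type1 V F c black rho tau
      then card (fix_nodes1 V tau // (fix_adj1 V F c tau)\<^sup>*)
      else card (fix_nodes2 F c tau // (fix_adj2 F c tau)\<^sup>*))"

section \<open>Medial graph X: oriented edges, closed paths, chains, homology\<close>

text \<open>The edge of X at corner i of face Q joins the midpoints of the edges
  {c Q (i-1), c Q i} and {c Q i, c Q (i+1)}. An oriented X-edge is (Q, i, s), where s = True
  means counterclockwise in Q (from the first midpoint to the second).\<close>
type_synonym 'f xedge = "'f \<times> nat \<times> bool"

fun xstart :: "('f \<Rightarrow> nat \<Rightarrow> 'v) \<Rightarrow> 'f xedge \<Rightarrow> 'v set" where
  "xstart c (Q, i, s) = (if s then {crn c Q (i + 3), crn c Q i} else {crn c Q i, crn c Q (Suc i)})"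

fun xend :: "('f \<Rightarrow> nat \<Rightarrow> 'v) \<Rightarrow> 'f xedge \<Rightarrow> 'v set" where
  "xend c (Q, i, s) = (if s then {crn c Q i, crn c Q (Suc i)} else {crn c Q (i + 3), crn c Q i})"

definition closed_X_path :: "'f set \<Rightarrow> ('f \<Rightarrow> nat \<Rightarrow> 'v) \<Rightarrow> 'f xedge list \<Rightarrow> bool" where
  "closed_X_path F c P \<longleftrightarrow> P \<noteq> [] \<and> (\<forall>(Q, i, s) \<in> set P. Q \<in> F \<and> i < 4) \<and>
     (\<forall>k < length P. xend c (P ! k) = xstart c (P ! (Suc k mod length P)))"

fun is_black_xedge :: "('f \<Rightarrow> nat \<Rightarrow> 'v) \<Rightarrow> ('v \<Rightarrow> bool) \<Rightarrow> 'f xedge \<Rightarrow> bool" where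
  "is_black_xedge c black (Q, i, s) \<longleftrightarrow> black (crn c Q (i + 3)) \<and> black (crn c Q (Suc i))"

fun is_white_xedge :: "('f \<Rightarrow> nat \<Rightarrow> 'v) \<Rightarrow> ('v \<Rightarrow> bool) \<Rightarrow> 'f xedge \<Rightarrow> bool" where
  "is_white_xedge c black (Q, i, s) \<longleftrightarrow> \<not> black (crn c Q (i + 3)) \<and> \<not> black (crn c Q (Suc i))"

text \<open>A discrete one-form is stored by its values on counterclockwise oriented X-edges:
  omega Q i for i < 4; the value on the reversed edge is the negative.\<close>
fun xval :: "('f \<Rightarrow> nat \<Rightarrow> complex) \<Rightarrow> 'f xedge \<Rightarrow> complex" where
  "xval \<omega> (Q, i, s) = (if s then \<omega> Q i else - \<omega> Q i)"

text \<open>Black and white periods 2 \<integral>_{BP} omega and 2 \<integral>_{WP} omega.\<close>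
definition bper :: "('f \<Rightarrow> nat \<Rightarrow> 'v) \<Rightarrow> ('v \<Rightarrow> bool) \<Rightarrow> 'f xedge list \<Rightarrow> ('f \<Rightarrow> nat \<Rightarrow> complex) \<Rightarrow> complex" where
  "bper c black P \<omega> = 2 * (\<Sum>e\<leftarrow>P. if is_black_xedge c black e then xval \<omega> e else 0)"

definition wper :: "('f \<Rightarrow> nat \<Rightarrow> 'v) \<Rightarrow> ('v \<Rightarrow> bool) \<Rightarrow> 'f xedge list \<Rightarrow> ('f \<Rightarrow> nat \<Rightarrow> complex) \<Rightarrow> complex" where
  "wper c black P \<omega> = 2 * (\<Sum>e\<leftarrow>P. if is_white_xedge c black e then xval \<omega> e else 0)"

text \<open>Integer 1-chains on X (coefficient of the ccw X-edge at corner i of Q, i < 4).\<close>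
type_synonym 'f xchain = "'f \<Rightarrow> nat \<Rightarrow> int"

definition path_chain :: "'f xedge list \<Rightarrow> 'f xchain" where
  "path_chain P = (\<lambda>Q i. \<Sum>e\<leftarrow>P. (if e = (Q, i, True) then 1 else if e = (Q, i, False) then -1 else 0))"

definition X_cycle :: "'f set \<Rightarrow> ('f \<Rightarrow> nat \<Rightarrow> 'v) \<Rightarrow> 'f xchain \<Rightarrow> bool" where
  "X_cycle F c ch \<longleftrightarrow> (\<forall>e. (\<Sum>Q\<in>F. \<Sum>i<4.
       (if {crn c Q i, crn c Q (Suc i)} = e then ch Q i else 0)
     - (if {crn c Q (i + 3), crn c Q i} = e then ch Q i else 0)) = 0)"

text \<open>Homology of the cell decomposition of the surface by X (faces F_Q and F_v):
  two chains are homologous iff they differ by an integer combination of face boundaries.\<close>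
definition homologous :: "'f set \<Rightarrow> ('f \<Rightarrow> nat \<Rightarrow> 'v) \<Rightarrow> 'f xchain \<Rightarrow> 'f xchain \<Rightarrow> bool" where
  "homologous F c ch1 ch2 \<longleftrightarrow>
     (\<exists>n :: 'f \<Rightarrow> int. \<exists>m :: 'v \<Rightarrow> int. \<forall>Q\<in>F. \<forall>i<4. ch1 Q i - ch2 Q i = n Q + m (crn c Q i))"

text \<open>Push-forward of chains by tau (orientation reversing on faces).\<close>
definition tau_push :: "'f set \<Rightarrow> ('f \<Rightarrow> nat \<Rightarrow> 'v) \<Rightarrow> ('v \<Rightarrow> 'v) \<Rightarrow> 'f xchain \<Rightarrow> 'f xchain" where
  "tau_push F c tau ch = (\<lambda>Q' j. - (\<Sum>Q\<in>F. \<Sum>i<4.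
       if tau ` corners c Q = corners c Q' \<and> tau (crn c Q i) = crn c Q' j then ch Q i else 0))"

text \<open>Intersection number of two X-cycles: the second cycle is pushed (homotopically) onto the
  graph with vertices V and F and edges v--Q (vertex-face incidences), by sliding midpoints
  of edges to their black endpoints; the X-edge at corner i of Q crosses exactly the
  incidence edge (c Q i)--Q once.\<close>
definition int_num :: "'f set \<Rightarrow> ('f \<Rightarrow> nat \<Rightarrow> 'v) \<Rightarrow> ('v \<Rightarrow> bool) \<Rightarrow> 'f xchain \<Rightarrow> 'f xchain \<Rightarrow> int" where
  "int_num F c black ch1 ch2 = (\<Sum>Q\<in>F. \<Sum>i<4. ch1 Q i *
      (if black (crn c Q i) then ch2 Q ((i + 1) mod 4) - ch2 Q ((i + 3) mod 4) else 0))"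

definition lincomb :: "nat \<Rightarrow> (nat \<Rightarrow> 'f xedge list) \<Rightarrow> (nat \<Rightarrow> 'f xedge list)
    \<Rightarrow> (nat \<Rightarrow> int) \<Rightarrow> (nat \<Rightarrow> int) \<Rightarrow> 'f xchain" where
  "lincomb g \<alpha> \<beta> p q = (\<lambda>Q i. \<Sum>k<g. p k * path_chain (\<alpha> k) Q i + q k * path_chain (\<beta> k) Q i)"

definition symplectic_X_basis :: "'f set \<Rightarrow> ('f \<Rightarrow> nat \<Rightarrow> 'v) \<Rightarrow> ('v \<Rightarrow> bool) \<Rightarrow> nat
    \<Rightarrow> (nat \<Rightarrow> 'f xedge list) \<Rightarrow> (nat \<Rightarrow> 'f xedge list) \<Rightarrow> bool" where
  "symplectic_X_basis F c black g \<alpha> \<beta> \<longleftrightarrow>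
     (\<forall>k<g. closed_X_path F c (\<alpha> k) \<and> closed_X_path F c (\<beta> k)) \<and>
     (\<forall>ch. X_cycle F c ch \<longrightarrow> (\<exists>p q. homologous F c ch (lincomb g \<alpha> \<beta> p q))) \<and>
     (\<forall>p q. homologous F c (lincomb g \<alpha> \<beta> p q) (\<lambda>_ _. 0) \<longrightarrow> (\<forall>k<g. p k = 0 \<and> q k = 0)) \<and>
     (\<forall>j<g. \<forall>k<g.
        int_num F c black (path_chain (\<alpha> j)) (path_chain (\<alpha> k)) = 0 \<and>
        int_num F c black (path_chain (\<beta> j)) (path_chain (\<beta> k)) = 0 \<and>
        int_num F c black (path_chain (\<alpha> j)) (path_chain (\<beta> k)) = (if j = k then 1 else 0))"

definition type_diamond :: "'f set \<Rightarrow> ('f \<Rightarrow> nat \<Rightarrow> complex) \<Rightarrow> bool" where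
  "type_diamond F \<omega> \<longleftrightarrow> (\<forall>Q\<in>F. \<omega> Q 1 = - \<omega> Q 3 \<and> \<omega> Q 2 = - \<omega> Q 0)"

definition closed_form :: "'v set \<Rightarrow> 'f set \<Rightarrow> ('f \<Rightarrow> nat \<Rightarrow> 'v) \<Rightarrow> ('f \<Rightarrow> nat \<Rightarrow> complex) \<Rightarrow> bool" where
  "closed_form V F c \<omega> \<longleftrightarrow>
     (\<forall>Q\<in>F. (\<Sum>i<4. \<omega> Q i) = 0) \<and>
     (\<forall>v\<in>V. (\<Sum>Q\<in>F. \<Sum>i<4. if crn c Q i = v then \<omega> Q i else 0) = 0)"

definition disc_holo_on :: "('f \<Rightarrow> nat \<Rightarrow> 'v) \<Rightarrow> ('f \<Rightarrow> complex) \<Rightarrow> 'f \<Rightarrow> ('v \<Rightarrow> complex) \<Rightarrow> bool" where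
  "disc_holo_on c rho Q f \<longleftrightarrow> f (c Q 3) - f (c Q 1) = \<i> * rho Q * (f (c Q 2) - f (c Q 0))"

definition disc_holo_diff :: "'v set \<Rightarrow> 'f set \<Rightarrow> ('f \<Rightarrow> nat \<Rightarrow> 'v) \<Rightarrow> ('f \<Rightarrow> complex)
    \<Rightarrow> ('f \<Rightarrow> nat \<Rightarrow> complex) \<Rightarrow> bool" where
  "disc_holo_diff V F c rho \<omega> \<longleftrightarrow>
     type_diamond F \<omega> \<and> closed_form V F c \<omega> \<and>
     (\<forall>Q\<in>F. \<exists>f :: 'v \<Rightarrow> complex. disc_holo_on c rho Q f \<and>
        (\<forall>i<4. \<omega> Q i = (f (crn c Q (Suc i)) - f (crn c Q (i + 3))) / 2))"

end

(*
  A discrete holomorphic differential is determined by its black and white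
  a-periods: a discrete Riemann bilinear relation turns the difference of two differentials
  with equal a-periods into a sum \<Sum> Re \<rho>_Q |d_Q|^2 that must vanish. For real \<rho>, complex
  conjugation (with the sign of the white part flipped) maps holomorphic differentials to
  holomorphic ones, and so does the conjugated pull-back by \<tau>, which exchanges black and
  white in Type 2. Since \<tau> fixes the a-cycles, both maps send the normalised differentials
  to differentials with known a-periods, hence to known differentials; as \<tau> reverses the
  b-cycles, comparing b-periods yields the reality and vanishing statements. The remaining
  (skew-)symmetries come from the bilinear relation applied to pairs of normalised differentials.
*)

theory Submission
  imports Defs
begin

lemma crn_eq: "i < 4 \<Longrightarrow> crn c Q i = c Q i"
  by (simp add: crn_def)

lemma crn_numeral [simp]:
  "crn c Q 0 = c Q 0" "crn c Q 1 = c Q 1" "crn c Q 2 = c Q 2" "crn c Q 3 = c Q 3"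
  "crn c Q 4 = c Q 0" "crn c Q 5 = c Q 1" "crn c Q 6 = c Q 2"
  by (simp_all add: crn_def)

lemma crn_Suc_numeral [simp]:
  "crn c Q (Suc 0) = c Q 1" "crn c Q (Suc (Suc 0)) = c Q 2" "crn c Q (Suc (Suc (Suc 0))) = c Q 3"
  by (simp_all add: crn_def) (simp_all only: numeral_2_eq_2 numeral_3_eq_3)

lemma crn_Suc_add_3 [simp]: "crn c Q (Suc (i + 3)) = crn c Q i"
  by (simp add: crn_def)

lemma sum_lessThan_4: "(\<Sum>i<(4::nat). f i) = f 0 + f 1 + f 2 + (f 3 :: 'a::comm_monoid_add)"
  by (simp add: eval_nat_numeral ac_simps)

lemma less_4_cases: "(i::nat) < 4 \<longleftrightarrow> i = 0 \<or> i = 1 \<or> i = 2 \<or> i = 3"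
  by auto

lemma sum_rotate: "(\<Sum>t<n. f (Suc t mod n)) = (\<Sum>t<n. f t :: 'a::comm_monoid_add)"
proof (cases n)
  case (Suc m)
  have "(\<Sum>t<Suc m. f (Suc t mod Suc m)) = (\<Sum>t<m. f (Suc t mod Suc m)) + f 0"
    by simp
  also have "(\<Sum>t<m. f (Suc t mod Suc m)) = (\<Sum>t<m. f (Suc t))"
    by (rule sum.cong) auto
  also have "(\<Sum>t<m. f (Suc t)) + f 0 = sum f {..<Suc m}"
    by (subst sum.lessThan_Suc_shift) (simp add: add.commute)
  finally show ?thesis using Suc by simp
qed simp

definition ccw_start :: "('f \<Rightarrow> nat \<Rightarrow> 'v) \<Rightarrow> 'f \<Rightarrow> nat \<Rightarrow> 'v set" where
  "ccw_start c Q i = {crn c Q (i + 3), crn c Q i}"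

definition ccw_end :: "('f \<Rightarrow> nat \<Rightarrow> 'v) \<Rightarrow> 'f \<Rightarrow> nat \<Rightarrow> 'v set" where
  "ccw_end c Q i = {crn c Q i, crn c Q (Suc i)}"

definition ccw_incidence :: "('f \<Rightarrow> nat \<Rightarrow> 'v) \<Rightarrow> 'f \<Rightarrow> nat \<Rightarrow> 'v set \<Rightarrow> int" where
  "ccw_incidence c Q i m = of_bool (ccw_end c Q i = m) - of_bool (ccw_start c Q i = m)"

definition chain_boundary :: "'f set \<Rightarrow> ('f \<Rightarrow> nat \<Rightarrow> 'v) \<Rightarrow> 'f xchain \<Rightarrow> 'v set \<Rightarrow> int" where
  "chain_boundary F c ch m = (\<Sum>Q\<in>F. \<Sum>i<4. ch Q i * ccw_incidence c Q i m)"

lemma X_cycle_iff_boundary: "X_cycle F c ch \<longleftrightarrow> (\<forall>m. chain_boundary F c ch m = 0)"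
proof -
  have eq: "(if {crn c Q i, crn c Q (Suc i)} = m then ch Q i else 0)
      - (if {crn c Q (i + 3), crn c Q i} = m then ch Q i else 0)
    = ch Q i * ccw_incidence c Q i m" for m Q i
    by (simp add: ccw_incidence_def ccw_start_def ccw_end_def algebra_simps)
  show ?thesis
    unfolding X_cycle_def chain_boundary_def eq ..
qed

lemma chain_boundary_add:
  "chain_boundary F c (\<lambda>Q i. a Q i + b Q i) m = chain_boundary F c a m + chain_boundary F c b m"
  by (simp add: chain_boundary_def sum.distrib[symmetric] algebra_simps)

lemma chain_boundary_uminus: "chain_boundary F c (\<lambda>Q i. - a Q i) m = - chain_boundary F c a m"
  by (simp add: chain_boundary_def sum_negf)

lemma path_chain_Nil: "path_chain [] = (\<lambda>Q i. 0)"
  by (simp add: path_chain_def)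

lemma path_chain_Cons: "path_chain (e # P) = (\<lambda>Q i. path_chain [e] Q i + path_chain P Q i)"
  by (simp add: path_chain_def)

lemma path_chain_single:
  "path_chain [(Q0, i0, s)] Q i = (if Q = Q0 \<and> i = i0 then (if s then 1 else -1) else 0)"
  by (simp add: path_chain_def)

section \<open>Face functions and their periods\<close>

definition face_pairing :: "'f set \<Rightarrow> nat \<Rightarrow> nat \<Rightarrow> 'f xchain \<Rightarrow> ('f \<Rightarrow> complex) \<Rightarrow> complex" where
  "face_pairing F p q ch u = (\<Sum>Q\<in>F. of_int (ch Q p - ch Q q) * u Q)"

text \<open>On a form of type \<open>\<diamond>\<close>, \<open>\<omega> Q 1\<close> is the common value of the two black edges of \<open>F\<^sub>Q\<close>
  oriented from the \<open>b\<^sub>-\<close> side to the \<open>b\<^sub>+\<close> side, and \<open>\<omega> Q 2\<close> the white analogue. Hence black and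
  white periods are \<open>face_pairing F 1 3\<close> and \<open>face_pairing F 2 0\<close> of the coefficients below
  (\<open>bper_eq_face_pairing\<close>, \<open>wper_eq_face_pairing\<close>).\<close>

definition black_coeff :: "('f \<Rightarrow> nat \<Rightarrow> complex) \<Rightarrow> 'f \<Rightarrow> complex" where
  "black_coeff \<omega> Q = 2 * \<omega> Q 1"

definition white_coeff :: "('f \<Rightarrow> nat \<Rightarrow> complex) \<Rightarrow> 'f \<Rightarrow> complex" where
  "white_coeff \<omega> Q = 2 * \<omega> Q 2"

lemma face_pairing_add_chain:
  "face_pairing F p q (\<lambda>Q i. a Q i + b Q i) u = face_pairing F p q a u + face_pairing F p q b u"
  by (simp add: face_pairing_def sum.distrib[symmetric] algebra_simps)

lemma face_pairing_uminus_chain: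
  "face_pairing F p q (\<lambda>Q i. - a Q i) u = - face_pairing F p q a u"
  by (simp add: face_pairing_def sum_negf[symmetric] algebra_simps)

lemma face_pairing_add:
  "face_pairing F p q ch (\<lambda>Q. u Q + w Q) = face_pairing F p q ch u + face_pairing F p q ch w"
  by (simp add: face_pairing_def sum.distrib[symmetric] algebra_simps)

lemma face_pairing_diff:
  "face_pairing F p q ch (\<lambda>Q. u Q - w Q) = face_pairing F p q ch u - face_pairing F p q ch w"
  by (simp add: face_pairing_def sum_subtractf[symmetric] algebra_simps)

lemma face_pairing_scale:
  "face_pairing F p q ch (\<lambda>Q. a * u Q) = a * face_pairing F p q ch u"
  by (simp add: face_pairing_def sum_distrib_left algebra_simps)

lemma face_pairing_uminus:
  "face_pairing F p q ch (\<lambda>Q. - u Q) = - face_pairing F p q ch u"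
  by (simp add: face_pairing_def sum_negf[symmetric])

lemma face_pairing_sum:
  "face_pairing F p q ch (\<lambda>Q. \<Sum>k\<in>K. u k Q) = (\<Sum>k\<in>K. face_pairing F p q ch (u k))"
  by (simp add: face_pairing_def sum_distrib_left sum.swap[of _ F])

lemma face_pairing_cnj:
  "face_pairing F p q ch (\<lambda>Q. cnj (u Q)) = cnj (face_pairing F p q ch u)"
  by (simp add: face_pairing_def cnj_sum)

text \<open>A face function \<open>u\<close> is read as a flow along the diagonal of each face \<open>Q\<close>,
  from corner \<open>q\<close> to corner \<open>p\<close>.\<close>

definition divergence ::
  "'f set \<Rightarrow> ('f \<Rightarrow> nat \<Rightarrow> 'v) \<Rightarrow> nat \<Rightarrow> nat \<Rightarrow> ('f \<Rightarrow> complex) \<Rightarrow> 'v \<Rightarrow> complex" where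
  "divergence F c p q u v = (\<Sum>Q\<in>F. (of_bool (c Q p = v) - of_bool (c Q q = v)) * u Q)"

definition divergence_free ::
  "'v set \<Rightarrow> 'f set \<Rightarrow> ('f \<Rightarrow> nat \<Rightarrow> 'v) \<Rightarrow> nat \<Rightarrow> nat \<Rightarrow> ('f \<Rightarrow> complex) \<Rightarrow> bool" where
  "divergence_free V F c p q u \<longleftrightarrow> (\<forall>v\<in>V. divergence F c p q u v = 0)"

lemma divergence_add:
  "divergence F c p q (\<lambda>Q. u Q + w Q) v = divergence F c p q u v + divergence F c p q w v"
  by (simp add: divergence_def sum.distrib[symmetric] algebra_simps)

lemma divergence_scale: "divergence F c p q (\<lambda>Q. a * u Q) v = a * divergence F c p q u v"
  by (simp add: divergence_def sum_distrib_left algebra_simps)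

lemma divergence_free_add:
  "divergence_free V F c p q u \<Longrightarrow> divergence_free V F c p q w \<Longrightarrow> divergence_free V F c p q (\<lambda>Q. u Q + w Q)"
  by (simp add: divergence_free_def divergence_add)

lemma divergence_free_scale:
  "divergence_free V F c p q u \<Longrightarrow> divergence_free V F c p q (\<lambda>Q. a * u Q)"
  by (simp add: divergence_free_def divergence_scale)

lemma divergence_free_uminus:
  "divergence_free V F c p q u \<Longrightarrow> divergence_free V F c p q (\<lambda>Q. - u Q)"
  using divergence_free_scale[of V F c p q u "-1"] by simp

lemma divergence_free_diff:
  "divergence_free V F c p q u \<Longrightarrow> divergence_free V F c p q w \<Longrightarrow> divergence_free V F c p q (\<lambda>Q. u Q - w Q)"
  using divergence_free_add[OF _ divergence_free_uminus] by simp

lemma divergence_free_sum: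
  "finite K \<Longrightarrow> (\<And>k. k \<in> K \<Longrightarrow> divergence_free V F c p q (u k))
    \<Longrightarrow> divergence_free V F c p q (\<lambda>Q. \<Sum>k\<in>K. u k Q)"
proof (induction K rule: finite_induct)
  case empty
  then show ?case by (simp add: divergence_free_def divergence_def)
next
  case (insert k K)
  then show ?case using divergence_free_add[of V F c p q "u k"] by simp
qed

lemma divergence_free_cnj:
  assumes "divergence_free V F c p q u"
  shows "divergence_free V F c p q (\<lambda>Q. cnj (u Q))"
proof -
  have "cnj (of_bool b) = of_bool b" for b
    by (cases b) simp_all
  then have "divergence F c p q (\<lambda>Q. cnj (u Q)) v = cnj (divergence F c p q u v)" for v
    by (simp add: divergence_def cnj_sum)
  with assms show ?thesis
    by (simp add: divergence_free_def)
qed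

lemma white_coeff_holomorphic:
  assumes "disc_holo_diff V F c rho \<omega>" "Q \<in> F"
  shows "white_coeff \<omega> Q = \<i> * rho Q * black_coeff \<omega> Q"
proof -
  obtain f where f: "disc_holo_on c rho Q f"
    "\<forall>i<4. \<omega> Q i = (f (crn c Q (Suc i)) - f (crn c Q (i + 3))) / 2"
    using assms unfolding disc_holo_diff_def by blast
  have n: "Suc 1 = 2" "Suc 2 = 3" "(1::nat) + 3 = 4" "(2::nat) + 3 = 5"
    by simp_all
  have "black_coeff \<omega> Q = f (c Q 2) - f (c Q 0)" "white_coeff \<omega> Q = f (c Q 3) - f (c Q 1)"
    using f(2)[rule_format, of 1] f(2)[rule_format, of 2] unfolding n
    by (simp_all add: black_coeff_def white_coeff_def mult.commute)
  with f(1) show ?thesis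
    by (simp add: disc_holo_on_def)
qed

locale quad_decomposition =
  fixes V :: "'v set" and F :: "'f set" and c :: "'f \<Rightarrow> nat \<Rightarrow> 'v" and black :: "'v \<Rightarrow> bool"
  assumes quad_surface: "quad_surface V F c black"
begin

lemma finite_V: "finite V" and finite_F: "finite F"
  using quad_surface by (auto simp: quad_surface_def)

lemma corner_in_V: "Q \<in> F \<Longrightarrow> i < 4 \<Longrightarrow> c Q i \<in> V"
  using quad_surface by (auto simp: quad_surface_def)

lemma inj_on_corners: "Q \<in> F \<Longrightarrow> inj_on (c Q) {..<4}"
  using quad_surface by (auto simp: quad_surface_def)

lemma corner_colours: "Q \<in> F \<Longrightarrow> black (c Q 0) \<and> \<not> black (c Q 1) \<and> black (c Q 2) \<and> \<not> black (c Q 3)"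
  using quad_surface by (auto simp: quad_surface_def)

lemma black_crn_iff:
  assumes "Q \<in> F"
  shows "black (crn c Q j) \<longleftrightarrow> even j"
proof -
  have "j mod 4 = 0 \<or> j mod 4 = 1 \<or> j mod 4 = 2 \<or> j mod 4 = 3"
    by linarith
  moreover have "even j \<longleftrightarrow> even (j mod 4)"
    by presburger
  ultimately show ?thesis
    using corner_colours[OF assms] unfolding crn_def by auto
qed

lemma corners_distinct:
  assumes "Q \<in> F"
  shows "c Q 0 \<noteq> c Q 1" "c Q 0 \<noteq> c Q 2" "c Q 0 \<noteq> c Q 3"
    "c Q 1 \<noteq> c Q 2" "c Q 1 \<noteq> c Q 3" "c Q 2 \<noteq> c Q 3"
  using inj_on_corners[OF assms] by (auto dest: inj_onD)

lemma summation_by_parts: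
  assumes "p < 4" "q < 4"
  shows "(\<Sum>Q\<in>F. (\<phi> (c Q p) - \<phi> (c Q q)) * u Q) = (\<Sum>v\<in>V. \<phi> v * divergence F c p q u v)"
proof -
  have "(\<Sum>v\<in>V. \<phi> v * ((of_bool (c Q p = v) - of_bool (c Q q = v)) * u Q))
      = (\<phi> (c Q p) - \<phi> (c Q q)) * u Q" if "Q \<in> F" for Q
  proof -
    have "\<phi> v * ((of_bool (c Q p = v) - of_bool (c Q q = v)) * u Q)
        = of_bool (c Q p = v) * (\<phi> v * u Q) - of_bool (c Q q = v) * (\<phi> v * u Q)" for v
      by (simp add: algebra_simps)
    moreover have "V \<inter> {v. c Q p = v} = {c Q p}" "V \<inter> {v. c Q q = v} = {c Q q}"
      using corner_in_V[OF that assms(1)] corner_in_V[OF that assms(2)] by auto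
    ultimately show ?thesis
      by (simp add: sum_subtractf finite_V left_diff_distrib)
  qed
  then show ?thesis
    unfolding divergence_def sum_distrib_left by (subst sum.swap) simp
qed

lemma sum_gradient_divergence_free:
  assumes "divergence_free V F c p q u" "p < 4" "q < 4"
  shows "(\<Sum>Q\<in>F. (\<phi> (c Q p) - \<phi> (c Q q)) * u Q) = 0"
  using assms by (simp add: summation_by_parts divergence_free_def)

lemma face_pairing_homologous:
  assumes "divergence_free V F c p q u" "homologous F c ch1 ch2" "p < 4" "q < 4"
  shows "face_pairing F p q ch1 u = face_pairing F p q ch2 u"
proof -
  obtain n m where nm: "\<forall>Q\<in>F. \<forall>i<4. ch1 Q i - ch2 Q i = n Q + m (crn c Q i)"
    using assms(2) by (auto simp: homologous_def)
  have "of_int (ch1 Q p - ch1 Q q) * u Q - of_int (ch2 Q p - ch2 Q q) * u Q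
      = (of_int (m (c Q p)) - of_int (m (c Q q))) * u Q" if "Q \<in> F" for Q
  proof -
    have "ch1 Q p - ch2 Q p = n Q + m (c Q p)" "ch1 Q q - ch2 Q q = n Q + m (c Q q)"
      using nm that assms(3,4) by (simp_all add: crn_eq)
    then have "(ch1 Q p - ch1 Q q) - (ch2 Q p - ch2 Q q) = m (c Q p) - m (c Q q)"
      by simp
    then show ?thesis
      by (metis left_diff_distrib of_int_diff)
  qed
  then have "face_pairing F p q ch1 u - face_pairing F p q ch2 u
      = (\<Sum>Q\<in>F. (of_int (m (c Q p)) - of_int (m (c Q q))) * u Q)"
    by (simp add: face_pairing_def sum_subtractf[symmetric])
  also have "\<dots> = 0"
    using sum_gradient_divergence_free[OF assms(1,3,4)] .
  finally show ?thesis by simp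
qed

lemma chain_boundary_single_edge:
  assumes "Q0 \<in> F" "i0 < 4"
  shows "chain_boundary F c (path_chain [(Q0, i0, s)]) m
    = of_bool (xend c (Q0, i0, s) = m) - of_bool (xstart c (Q0, i0, s) = m)"
proof -
  have "(\<Sum>i<4. path_chain [(Q0, i0, s)] Q i * d i) = (if Q = Q0 then (if s then 1 else -1) * d i0 else 0)"
    for Q and d :: "nat \<Rightarrow> int"
    using assms(2) by (simp add: path_chain_single if_distrib[of "\<lambda>x. x * _"] cong: if_cong)
  then show ?thesis
    using assms
    by (cases s) (simp_all add: chain_boundary_def finite_F ccw_incidence_def ccw_start_def ccw_end_def)
qed

lemma chain_boundary_path_chain:
  assumes "\<forall>(Q, i, s)\<in>set P. Q \<in> F \<and> i < 4"
  shows "chain_boundary F c (path_chain P) m = (\<Sum>e\<leftarrow>P. of_bool (xend c e = m) - of_bool (xstart c e = m))"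
  using assms
proof (induction P)
  case Nil
  then show ?case by (simp add: chain_boundary_def path_chain_Nil)
next
  case (Cons e P)
  obtain Q0 i0 s where e: "e = (Q0, i0, s)" by (cases e) auto
  with Cons.prems have "Q0 \<in> F" "i0 < 4" by auto
  then have "chain_boundary F c (path_chain [e]) m = of_bool (xend c e = m) - of_bool (xstart c e = m)"
    unfolding e by (rule chain_boundary_single_edge)
  with Cons show ?case
    unfolding path_chain_Cons[of e P] chain_boundary_add by simp
qed

lemma closed_X_path_cycle:
  assumes "closed_X_path F c P"
  shows "X_cycle F c (path_chain P)"
proof -
  have P: "\<forall>(Q, i, s)\<in>set P. Q \<in> F \<and> i < 4"
    and closed: "\<forall>k < length P. xend c (P ! k) = xstart c (P ! (Suc k mod length P))"
    using assms by (auto simp: closed_X_path_def)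
  have "chain_boundary F c (path_chain P) m = 0" for m
  proof -
    let ?start = "\<lambda>t. of_bool (xstart c (P ! t) = m) :: int"
    have "chain_boundary F c (path_chain P) m
        = (\<Sum>t<length P. of_bool (xend c (P ! t) = m) - ?start t)"
      by (simp add: chain_boundary_path_chain[OF P] sum_list_sum_nth atLeast0LessThan)
    also have "\<dots> = (\<Sum>t<length P. ?start (Suc t mod length P) - ?start t)"
      using closed by (intro sum.cong) auto
    also have "\<dots> = 0"
      by (simp add: sum_subtractf sum_rotate[of ?start])
    finally show ?thesis .
  qed
  then show ?thesis
    by (simp add: X_cycle_iff_boundary)
qed

lemma face_pairing_single_edge:
  assumes "Q0 \<in> F"
  shows "face_pairing F p q (path_chain [(Q0, i0, s)]) u
    = (if s then 1 else -1) * (of_bool (i0 = p) - of_bool (i0 = q)) * u Q0"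
  using assms
  by (cases s) (auto simp: face_pairing_def path_chain_single finite_F if_distrib[of complex_of_int]
      if_distrib[of "\<lambda>x. x * _"] sum_negf cong: if_cong)

lemma black_period_single_edge:
  assumes "Q0 \<in> F" "i0 < 4" "\<omega> Q0 3 = - \<omega> Q0 1"
  shows "2 * (if is_black_xedge c black (Q0, i0, s) then xval \<omega> (Q0, i0, s) else 0)
      = face_pairing F 1 3 (path_chain [(Q0, i0, s)]) (black_coeff \<omega>)"
  using assms(2) corner_colours[OF assms(1)] assms(3) unfolding less_4_cases
  by (cases s; elim disjE; simp add: face_pairing_single_edge[OF assms(1)] black_coeff_def)

lemma white_period_single_edge:
  assumes "Q0 \<in> F" "i0 < 4" "\<omega> Q0 0 = - \<omega> Q0 2"
  shows "2 * (if is_white_xedge c black (Q0, i0, s) then xval \<omega> (Q0, i0, s) else 0)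
      = face_pairing F 2 0 (path_chain [(Q0, i0, s)]) (white_coeff \<omega>)"
  using assms(2) corner_colours[OF assms(1)] assms(3) unfolding less_4_cases
  by (cases s; elim disjE; simp add: face_pairing_single_edge[OF assms(1)] white_coeff_def)

lemma bper_eq_face_pairing:
  assumes "\<forall>(Q, i, s)\<in>set P. Q \<in> F \<and> i < 4" "type_diamond F \<omega>"
  shows "bper c black P \<omega> = face_pairing F 1 3 (path_chain P) (black_coeff \<omega>)"
  using assms(1)
proof (induction P)
  case Nil
  then show ?case by (simp add: bper_def face_pairing_def path_chain_Nil)
next
  case (Cons e P)
  obtain Q0 i0 s where e: "e = (Q0, i0, s)" by (cases e) auto
  with Cons.prems assms(2) have "Q0 \<in> F" "i0 < 4" "\<omega> Q0 3 = - \<omega> Q0 1"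
    by (auto simp: type_diamond_def)
  from black_period_single_edge[of Q0 i0 \<omega> s, OF this] Cons show ?case
    unfolding path_chain_Cons[of e P] face_pairing_add_chain by (simp add: bper_def e)
qed

lemma wper_eq_face_pairing:
  assumes "\<forall>(Q, i, s)\<in>set P. Q \<in> F \<and> i < 4" "type_diamond F \<omega>"
  shows "wper c black P \<omega> = face_pairing F 2 0 (path_chain P) (white_coeff \<omega>)"
  using assms(1)
proof (induction P)
  case Nil
  then show ?case by (simp add: wper_def face_pairing_def path_chain_Nil)
next
  case (Cons e P)
  obtain Q0 i0 s where e: "e = (Q0, i0, s)" by (cases e) auto
  with Cons.prems assms(2) have "Q0 \<in> F" "i0 < 4" "\<omega> Q0 0 = - \<omega> Q0 2"
    by (auto simp: type_diamond_def)
  from white_period_single_edge[of Q0 i0 \<omega> s, OF this] Cons show ?case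
    unfolding path_chain_Cons[of e P] face_pairing_add_chain by (simp add: wper_def e)
qed

lemma closed_form_black_divergence_free:
  assumes "closed_form V F c \<omega>" "type_diamond F \<omega>"
  shows "divergence_free V F c 1 3 (black_coeff \<omega>)"
  unfolding divergence_free_def
proof
  fix v assume v: "v \<in> V"
  show "divergence F c 1 3 (black_coeff \<omega>) v = 0"
  proof (cases "black v")
    case False
    then have "(of_bool (c Q 1 = v) - of_bool (c Q 3 = v)) * black_coeff \<omega> Q
        = 2 * (\<Sum>i<4. if crn c Q i = v then \<omega> Q i else 0)" if "Q \<in> F" for Q
      using corner_colours[OF that] assms(2) that
      by (auto simp: sum_lessThan_4 black_coeff_def type_diamond_def)
    then have "divergence F c 1 3 (black_coeff \<omega>) v
        = 2 * (\<Sum>Q\<in>F. \<Sum>i<4. if crn c Q i = v then \<omega> Q i else 0)"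
      by (simp add: divergence_def sum_distrib_left)
    with assms(1) v show ?thesis
      by (simp add: closed_form_def)
  next
    case True
    then have "c Q 1 \<noteq> v" "c Q 3 \<noteq> v" if "Q \<in> F" for Q
      using corner_colours[OF that] by auto
    then show ?thesis
      by (simp add: divergence_def)
  qed
qed

lemma closed_form_white_divergence_free:
  assumes "closed_form V F c \<omega>" "type_diamond F \<omega>"
  shows "divergence_free V F c 2 0 (white_coeff \<omega>)"
  unfolding divergence_free_def
proof
  fix v assume v: "v \<in> V"
  show "divergence F c 2 0 (white_coeff \<omega>) v = 0"
  proof (cases "black v")
    case True
    then have "(of_bool (c Q 2 = v) - of_bool (c Q 0 = v)) * white_coeff \<omega> Q
        = 2 * (\<Sum>i<4. if crn c Q i = v then \<omega> Q i else 0)" if "Q \<in> F" for Q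
      using corner_colours[OF that] assms(2) that
      by (auto simp: sum_lessThan_4 white_coeff_def type_diamond_def)
    then have "divergence F c 2 0 (white_coeff \<omega>) v
        = 2 * (\<Sum>Q\<in>F. \<Sum>i<4. if crn c Q i = v then \<omega> Q i else 0)"
      by (simp add: divergence_def sum_distrib_left)
    with assms(1) v show ?thesis
      by (simp add: closed_form_def)
  next
    case False
    then have "c Q 2 \<noteq> v" "c Q 0 \<noteq> v" if "Q \<in> F" for Q
      using corner_colours[OF that] by auto
    then show ?thesis
      by (simp add: divergence_def)
  qed
qed

end

section \<open>Intersection numbers\<close>

text \<open>The Poincare dual of a cycle, used as a black coefficient: pairing it with another cycle
  computes their intersection number (\<open>face_pairing_cycle_dual\<close>).\<close>

definition cycle_dual :: "'f xchain \<Rightarrow> 'f \<Rightarrow> complex" where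
  "cycle_dual ch Q = of_int (ch Q 2 - ch Q 0)"

definition edge_weight :: "('f \<Rightarrow> nat \<Rightarrow> 'v) \<Rightarrow> 'f \<Rightarrow> nat \<Rightarrow> 'f \<Rightarrow> nat \<Rightarrow> int" where
  "edge_weight c Q i Q' i' =
     (-1) ^ i * (ccw_incidence c Q' i' (ccw_start c Q i) + ccw_incidence c Q' i' (ccw_end c Q i))"

definition boundary_pairing :: "'f set \<Rightarrow> ('f \<Rightarrow> nat \<Rightarrow> 'v) \<Rightarrow> 'f xchain \<Rightarrow> 'f xchain \<Rightarrow> int" where
  "boundary_pairing F c a b = (\<Sum>(Q, i)\<in>F \<times> {..<4}.
     (-1) ^ i * b Q i * (chain_boundary F c a (ccw_start c Q i) + chain_boundary F c a (ccw_end c Q i)))"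

lemma sum_pairs_swap:
  "(\<Sum>(Q, i)\<in>S. \<Sum>(Q', i')\<in>S. f Q i Q' i') = (\<Sum>(Q, i)\<in>S. \<Sum>(Q', i')\<in>S. f Q' i' Q i)"
proof -
  have "(\<Sum>(Q, i)\<in>S. \<Sum>(Q', i')\<in>S. f Q i Q' i') = (\<Sum>x\<in>S. \<Sum>y\<in>S. f (fst x) (snd x) (fst y) (snd y))"
    by (simp add: split_def)
  also have "\<dots> = (\<Sum>y\<in>S. \<Sum>x\<in>S. f (fst x) (snd x) (fst y) (snd y))"
    by (rule sum.swap)
  finally show ?thesis
    by (simp add: split_def)
qed

lemma boundary_pairing_expand:
  "boundary_pairing F c a b
    = (\<Sum>(Q, i)\<in>F \<times> {..<4}. \<Sum>(Q', i')\<in>F \<times> {..<4}. b Q i * a Q' i' * edge_weight c Q i Q' i')"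
  unfolding boundary_pairing_def
proof (rule sum.cong[OF refl], clarify)
  fix Q i
  show "(-1) ^ i * b Q i * (chain_boundary F c a (ccw_start c Q i) + chain_boundary F c a (ccw_end c Q i))
      = (\<Sum>(Q', i')\<in>F \<times> {..<4}. b Q i * a Q' i' * edge_weight c Q i Q' i')"
    unfolding chain_boundary_def edge_weight_def sum.cartesian_product sum.distrib[symmetric]
      sum_distrib_left
    by (intro sum.cong refl) (simp add: split_def algebra_simps)
qed

lemma boundary_pairing_symmetrized:
  "boundary_pairing F c a b + boundary_pairing F c b a
    = (\<Sum>(Q, i)\<in>F \<times> {..<4}. \<Sum>(Q', i')\<in>F \<times> {..<4}.
         b Q i * a Q' i' * (edge_weight c Q i Q' i' + edge_weight c Q' i' Q i))"
    (is "_ = (\<Sum>(Q, i)\<in>?S. _)")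
proof -
  have swapped: "boundary_pairing F c b a
      = (\<Sum>(Q, i)\<in>?S. \<Sum>(Q', i')\<in>?S. a Q' i' * b Q i * edge_weight c Q' i' Q i)"
    unfolding boundary_pairing_expand[of F c b a] by (rule sum_pairs_swap)
  show ?thesis
    unfolding swapped boundary_pairing_expand[of F c a b] sum.distrib[symmetric]
    by (intro sum.cong refl)
      (clarsimp simp: sum.distrib[symmetric] split_def intro!: sum.cong; simp add: algebra_simps)
qed

context quad_decomposition
begin

lemma oriented_edge_unique:
  assumes "Q \<in> F" "Q' \<in> F" "crn c Q j = crn c Q' j'" "crn c Q (Suc j) = crn c Q' (Suc j')"
  shows "Q = Q'"
proof -
  have unique: "\<forall>Q\<in>F. \<forall>Q'\<in>F. \<forall>i<4. \<forall>j<4. crn c Q i = crn c Q' j \<and>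
      crn c Q (Suc i) = crn c Q' (Suc j) \<longrightarrow> Q = Q' \<and> i = j"
    using quad_surface unfolding quad_surface_def by blast
  have "crn c Q (j mod 4) = crn c Q j" "crn c Q (Suc (j mod 4)) = crn c Q (Suc j)"
    "crn c Q' (j' mod 4) = crn c Q' j'" "crn c Q' (Suc (j' mod 4)) = crn c Q' (Suc j')"
    by (simp_all add: crn_def mod_Suc_eq)
  with unique[rule_format, of Q Q' "j mod 4" "j' mod 4"] assms show ?thesis
    by simp
qed

text \<open>Distinct faces traverse a common edge in opposite directions, and colours alternate
  around each face.\<close>

lemma shared_edge_parity:
  assumes "Q \<in> F" "Q' \<in> F" "Q \<noteq> Q'"
    and "{crn c Q j, crn c Q (Suc j)} = {crn c Q' j', crn c Q' (Suc j')}"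
  shows "even j \<longleftrightarrow> odd j'"
proof -
  have "crn c Q j = crn c Q' (Suc j')"
    using assms oriented_edge_unique by (auto simp: doubleton_eq_iff)
  then show ?thesis
    using black_crn_iff[OF assms(1), of j] black_crn_iff[OF assms(2), of "Suc j'"] by simp
qed

lemma ccw_start_as_edge: "ccw_start c Q i = {crn c Q (i + 3), crn c Q (Suc (i + 3))}"
  unfolding ccw_start_def crn_Suc_add_3 ..

lemma edge_weight_antisym_distinct_faces:
  assumes "Q \<in> F" "Q' \<in> F" "Q \<noteq> Q'"
  shows "edge_weight c Q i Q' i' + edge_weight c Q' i' Q i = 0"
proof -
  let ?s = "ccw_start c Q i" and ?e = "ccw_end c Q i"
  let ?s' = "ccw_start c Q' i'" and ?e' = "ccw_end c Q' i'"
  let ?\<sigma> = "(-1::int) ^ i" and ?\<sigma>' = "(-1::int) ^ i'"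
  note parity = shared_edge_parity[OF assms]
  have "?\<sigma> = ?\<sigma>'" if "?e' = ?s"
    using parity[of "i + 3" i'] that[unfolded ccw_start_as_edge ccw_end_def, symmetric]
    by (simp add: minus_one_power_iff)
  moreover have "?\<sigma> = - ?\<sigma>'" if "?s' = ?s"
    using parity[of "i + 3" "i' + 3"] that[unfolded ccw_start_as_edge, symmetric]
    by (simp add: minus_one_power_iff)
  moreover have "?\<sigma> = - ?\<sigma>'" if "?e' = ?e"
    using parity[of i i'] that[unfolded ccw_end_def, symmetric]
    by (simp add: minus_one_power_iff)
  moreover have "?\<sigma> = ?\<sigma>'" if "?s' = ?e"
    using parity[of i "i' + 3"] that[unfolded ccw_start_as_edge ccw_end_def, symmetric]
    by (simp add: minus_one_power_iff)
  moreover have "edge_weight c Q i Q' i' + edge_weight c Q' i' Q i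
      = (?\<sigma> - ?\<sigma>') * of_bool (?e' = ?s) - (?\<sigma> + ?\<sigma>') * of_bool (?s' = ?s)
        + (?\<sigma> + ?\<sigma>') * of_bool (?e' = ?e) - (?\<sigma> - ?\<sigma>') * of_bool (?s' = ?e)"
    by (simp add: edge_weight_def ccw_incidence_def eq_commute[of ?e ?s'] eq_commute[of ?s ?s']
        eq_commute[of ?e ?e'] eq_commute[of ?s ?e'] algebra_simps)
  ultimately show ?thesis
    by (cases "?e' = ?s"; cases "?s' = ?s"; cases "?e' = ?e"; cases "?s' = ?e") simp_all
qed

lemma edge_weight_same_face:
  assumes "Q \<in> F"
  shows "(\<Sum>i<4. \<Sum>i'<4. b Q i * a Q i' * (edge_weight c Q i Q i' + edge_weight c Q i' Q i))
    = -2 * ((a Q 0 - a Q 2) * (b Q 1 - b Q 3) + (b Q 0 - b Q 2) * (a Q 1 - a Q 3))"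
proof -
  have "ccw_start c Q 0 = ccw_end c Q 3" "ccw_start c Q 1 = ccw_end c Q 0"
    "ccw_start c Q 2 = ccw_end c Q 1" "ccw_start c Q 3 = ccw_end c Q 2"
    by (simp_all add: ccw_start_def ccw_end_def insert_commute)
  moreover have "ccw_end c Q i \<noteq> ccw_end c Q j" if "i < 4" "j < 4" "i \<noteq> j" for i j
    using corners_distinct[OF assms] that unfolding less_4_cases
    by (auto simp: ccw_end_def doubleton_eq_iff)
  ultimately show ?thesis
    by (simp add: sum_lessThan_4 edge_weight_def ccw_incidence_def algebra_simps)
qed

lemma int_num_eq: "int_num F c black a b = (\<Sum>Q\<in>F. (a Q 0 - a Q 2) * (b Q 1 - b Q 3))"
  unfolding int_num_def
proof (rule sum.cong[OF refl])
  fix Q assume "Q \<in> F"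
  moreover have "(0 + 1) mod 4 = (1::nat)" "(0 + 3) mod 4 = (3::nat)" "(2 + 1) mod 4 = (3::nat)"
    "(2 + 3) mod 4 = (1::nat)"
    by simp_all
  ultimately show "(\<Sum>i<4. a Q i * (if black (crn c Q i) then b Q ((i + 1) mod 4) - b Q ((i + 3) mod 4) else 0))
      = (a Q 0 - a Q 2) * (b Q 1 - b Q 3)"
    using corner_colours unfolding sum_lessThan_4 by (simp add: algebra_simps del: One_nat_def)
qed

text \<open>The discrete analogue of \<open>\<integral> d(f g) = 0\<close>: the boundary pairing of cycles vanishes, and
  after cancelling the contributions of faces sharing an edge it becomes \<open>-2\<close> times the
  symmetrised intersection number.\<close>

theorem int_num_antisym:
  assumes "X_cycle F c a" "X_cycle F c b"
  shows "int_num F c black a b + int_num F c black b a = 0"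
proof -
  let ?S = "F \<times> {..<4::nat}"
  let ?K = "\<lambda>Q i Q' i'. edge_weight c Q i Q' i' + edge_weight c Q' i' Q i"
  have "0 = boundary_pairing F c a b + boundary_pairing F c b a"
    using assms by (simp add: boundary_pairing_def X_cycle_iff_boundary)
  also have "\<dots> = (\<Sum>(Q, i)\<in>?S. \<Sum>(Q', i')\<in>?S. b Q i * a Q' i' * ?K Q i Q' i')"
    by (rule boundary_pairing_symmetrized)
  also have "\<dots> = (\<Sum>(Q, i)\<in>?S. \<Sum>i'<4. b Q i * a Q i' * ?K Q i Q i')"
  proof (rule sum.cong[OF refl], clarify)
    fix Q i assume Q: "Q \<in> F"
    have "(\<Sum>(Q', i')\<in>?S. b Q i * a Q' i' * ?K Q i Q' i')
        = (\<Sum>Q'\<in>F. if Q' = Q then \<Sum>i'<4. b Q i * a Q i' * ?K Q i Q i' else 0)"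
      unfolding sum.cartesian_product[symmetric]
      by (intro sum.cong refl) (simp add: edge_weight_antisym_distinct_faces[OF Q])
    then show "(\<Sum>(Q', i')\<in>?S. b Q i * a Q' i' * ?K Q i Q' i') = (\<Sum>i'<4. b Q i * a Q i' * ?K Q i Q i')"
      using Q by (simp add: finite_F)
  qed
  also have "\<dots> = (\<Sum>Q\<in>F. -2 * ((a Q 0 - a Q 2) * (b Q 1 - b Q 3) + (b Q 0 - b Q 2) * (a Q 1 - a Q 3)))"
    unfolding sum.cartesian_product[symmetric] by (intro sum.cong refl) (simp add: edge_weight_same_face)
  also have "\<dots> = -2 * (int_num F c black a b + int_num F c black b a)"
    by (simp add: int_num_eq sum.distrib[symmetric] sum_distrib_left)
  finally show ?thesis by simp
qed

lemma face_pairing_cycle_dual: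
  "face_pairing F 1 3 b (cycle_dual a) = - of_int (int_num F c black a b)"
  unfolding int_num_eq face_pairing_def cycle_dual_def of_int_sum sum_negf[symmetric]
  by (rule sum.cong) (simp_all add: algebra_simps)

lemma ccw_edges_in_lam_edges:
  assumes "Q \<in> F" "i < 4"
  shows "ccw_end c Q i \<in> lam_edges F c" "ccw_start c Q i \<in> lam_edges F c"
proof -
  have "ccw_start c Q i = {crn c Q ((i + 3) mod 4), crn c Q (Suc ((i + 3) mod 4))}"
    by (simp add: ccw_start_def crn_def mod_Suc_eq insert_commute)
  then show "ccw_end c Q i \<in> lam_edges F c" "ccw_start c Q i \<in> lam_edges F c"
    unfolding lam_edges_def ccw_end_def using assms by fastforce+
qed

lemma finite_lam_edges: "finite (lam_edges F c)"
proof -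
  have "lam_edges F c = (\<lambda>(Q, i). {crn c Q i, crn c Q (Suc i)}) ` (F \<times> {..<4})"
    unfolding lam_edges_def by auto
  then show ?thesis using finite_F by simp
qed

text \<open>Sum the boundary of the cycle over all edges through \<open>v\<close>.\<close>

lemma cycle_vertex_balance:
  assumes "X_cycle F c ch" "v \<in> V"
  shows "(\<Sum>Q\<in>F. \<Sum>i<4. ch Q i * (of_bool (v \<in> ccw_end c Q i) - of_bool (v \<in> ccw_start c Q i))) = 0"
proof -
  let ?E = "{m \<in> lam_edges F c. v \<in> m}"
  have "0 = (\<Sum>m\<in>?E. chain_boundary F c ch m)"
    using assms(1) by (simp add: X_cycle_iff_boundary)
  also have "\<dots> = (\<Sum>Q\<in>F. \<Sum>i<4. ch Q i * (\<Sum>m\<in>?E. ccw_incidence c Q i m))"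
    unfolding chain_boundary_def by (simp add: sum_distrib_left sum.swap[of _ ?E])
  also have "\<dots> = (\<Sum>Q\<in>F. \<Sum>i<4. ch Q i * (of_bool (v \<in> ccw_end c Q i) - of_bool (v \<in> ccw_start c Q i)))"
  proof (intro sum.cong refl)
    fix Q i assume "Q \<in> F" "i \<in> {..<4::nat}"
    then show "ch Q i * (\<Sum>m\<in>?E. ccw_incidence c Q i m)
        = ch Q i * (of_bool (v \<in> ccw_end c Q i) - of_bool (v \<in> ccw_start c Q i))"
      using ccw_edges_in_lam_edges[of Q i] finite_lam_edges
      by (simp add: ccw_incidence_def sum_subtractf of_bool_def sum.delta sum.delta')
  qed
  finally show ?thesis by simp
qed

lemma cycle_dual_divergence_free:
  assumes "X_cycle F c ch"
  shows "divergence_free V F c 1 3 (cycle_dual ch)"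
  unfolding divergence_free_def
proof
  fix v assume v: "v \<in> V"
  show "divergence F c 1 3 (cycle_dual ch) v = 0"
  proof (cases "black v")
    case True
    then have "c Q 1 \<noteq> v" "c Q 3 \<noteq> v" if "Q \<in> F" for Q
      using corner_colours[OF that] by auto
    then show ?thesis
      by (simp add: divergence_def)
  next
    case False
    have "(of_bool (c Q 1 = v) - of_bool (c Q 3 = v)) * cycle_dual ch Q
        = - of_int (\<Sum>i<4. ch Q i * (of_bool (v \<in> ccw_end c Q i) - of_bool (v \<in> ccw_start c Q i)))"
      if Q: "Q \<in> F" for Q
      using corner_colours[OF Q] corners_distinct[OF Q] False
      by (auto simp: sum_lessThan_4 cycle_dual_def ccw_start_def ccw_end_def algebra_simps)
    then have "divergence F c 1 3 (cycle_dual ch) v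
        = - of_int (\<Sum>Q\<in>F. \<Sum>i<4. ch Q i * (of_bool (v \<in> ccw_end c Q i) - of_bool (v \<in> ccw_start c Q i)))"
      by (simp add: divergence_def of_int_sum sum_negf)
    with cycle_vertex_balance[OF assms v] show ?thesis
      by simp
  qed
qed

section \<open>Face functions with vanishing periods are exact\<close>

lemma flags_rotation_connected:
  "v \<in> V \<Longrightarrow> x \<in> flags_at F c v \<Longrightarrow> y \<in> flags_at F c v \<Longrightarrow> (x, y) \<in> (rot_rel F c v)\<^sup>*"
  using quad_surface unfolding quad_surface_def by blast

definition joinable :: "'v set \<Rightarrow> 'v set \<Rightarrow> bool" where
  "joinable m m' \<longleftrightarrow> (\<exists>\<gamma>. \<forall>e. chain_boundary F c \<gamma> e = of_bool (e = m') - of_bool (e = m))"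

lemma joinable_refl: "joinable m m"
  unfolding joinable_def by (rule exI[of _ "\<lambda>Q i. 0"]) (simp add: chain_boundary_def)

lemma joinable_sym: "joinable m m' \<Longrightarrow> joinable m' m"
  unfolding joinable_def by (metis chain_boundary_uminus minus_diff_eq)

lemma joinable_trans: "joinable m m' \<Longrightarrow> joinable m' m'' \<Longrightarrow> joinable m m''"
  unfolding joinable_def
proof (elim exE)
  fix \<gamma>1 \<gamma>2
  assume "\<forall>e. chain_boundary F c \<gamma>1 e = of_bool (e = m') - of_bool (e = m)"
    "\<forall>e. chain_boundary F c \<gamma>2 e = of_bool (e = m'') - of_bool (e = m')"
  then show "\<exists>\<gamma>. \<forall>e. chain_boundary F c \<gamma> e = of_bool (e = m'') - of_bool (e = m)"
    by (intro exI[of _ "\<lambda>Q i. \<gamma>1 Q i + \<gamma>2 Q i"]) (simp add: chain_boundary_add)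
qed

text \<open>The potential of a face function is obtained by integrating it from a fixed base point
  \<open>anchor m\<close> of the component of the midpoint \<open>m\<close>; vanishing cycle periods make it independent
  of the chosen chain.\<close>

definition anchor :: "'v set \<Rightarrow> 'v set" where
  "anchor m = (SOME x. joinable x m)"

definition joining_chain :: "'v set \<Rightarrow> 'f xchain" where
  "joining_chain m = (SOME \<gamma>. \<forall>e. chain_boundary F c \<gamma> e = of_bool (e = m) - of_bool (e = anchor m))"

definition midpoint_potential :: "('f \<Rightarrow> complex) \<Rightarrow> 'v set \<Rightarrow> complex" where
  "midpoint_potential u m = face_pairing F 1 3 (joining_chain m) u"

lemma anchor_joinable: "joinable (anchor m) m"
  unfolding anchor_def by (rule someI[of _ m]) (rule joinable_refl)

lemma anchor_eq: "joinable m m' \<Longrightarrow> anchor m = anchor m'"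
  unfolding anchor_def by (metis joinable_sym joinable_trans)

lemma chain_boundary_joining_chain:
  "chain_boundary F c (joining_chain m) e = of_bool (e = m) - of_bool (e = anchor m)"
proof -
  have "\<exists>\<gamma>. \<forall>e. chain_boundary F c \<gamma> e = of_bool (e = m) - of_bool (e = anchor m)"
    using anchor_joinable[of m] unfolding joinable_def .
  then show ?thesis
    unfolding joining_chain_def by (rule someI_ex[THEN spec])
qed

lemma midpoint_potential_diff:
  assumes periods: "\<forall>ch. X_cycle F c ch \<longrightarrow> face_pairing F 1 3 ch u = 0"
    and \<gamma>: "\<forall>e. chain_boundary F c \<gamma> e = of_bool (e = m') - of_bool (e = m)"
  shows "midpoint_potential u m' - midpoint_potential u m = face_pairing F 1 3 \<gamma> u"
proof -
  have same_anchor: "anchor m = anchor m'"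
    using \<gamma> anchor_eq joinable_def by blast
  let ?cycle = "\<lambda>Q i. joining_chain m Q i + \<gamma> Q i + - joining_chain m' Q i"
  have "chain_boundary F c ?cycle e = 0" for e
    unfolding chain_boundary_add chain_boundary_uminus chain_boundary_joining_chain \<gamma>[rule_format]
      same_anchor by simp
  then have "face_pairing F 1 3 ?cycle u = 0"
    using periods by (simp add: X_cycle_iff_boundary)
  then show ?thesis
    unfolding midpoint_potential_def face_pairing_add_chain face_pairing_uminus_chain
    by (simp add: algebra_simps)
qed

lemma midpoint_potential_edge:
  assumes periods: "\<forall>ch. X_cycle F c ch \<longrightarrow> face_pairing F 1 3 ch u = 0"
    and "Q \<in> F" "i < 4"
  shows "midpoint_potential u (ccw_end c Q i) - midpoint_potential u (ccw_start c Q i)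
    = (of_bool (i = 1) - of_bool (i = 3)) * u Q"
proof -
  have "\<forall>e. chain_boundary F c (path_chain [(Q, i, True)]) e
      = of_bool (e = ccw_end c Q i) - of_bool (e = ccw_start c Q i)"
    using chain_boundary_single_edge[OF assms(2,3)] by (auto simp: ccw_start_def ccw_end_def)
  from midpoint_potential_diff[OF periods this] show ?thesis
    by (simp add: face_pairing_single_edge[OF assms(2)])
qed

text \<open>The edges of \<open>X\<close> at black corners carry no black coefficient, so the potential is constant
  on the midpoints around a black vertex.\<close>

lemma midpoint_potential_around_black_vertex:
  assumes periods: "\<forall>ch. X_cycle F c ch \<longrightarrow> face_pairing F 1 3 ch u = 0"
    and b: "b \<in> V" "black b" and flags: "x \<in> flags_at F c b" "y \<in> flags_at F c b"
  shows "midpoint_potential u (ccw_start c (fst y) (snd y))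
    = midpoint_potential u (ccw_start c (fst x) (snd x))"
proof -
  have "(x, y) \<in> (rot_rel F c b)\<^sup>*"
    using flags_rotation_connected[OF b(1) flags] .
  then show ?thesis
  proof (induction rule: rtrancl_induct)
    case (step y z)
    obtain Q1 i1 Q2 i2 where yz: "y = (Q1, i1)" "z = (Q2, i2)" by fastforce
    have rot: "Q2 \<in> F" "i2 < 4" "crn c Q2 i2 = b" "crn c Q2 (Suc i2) = crn c Q1 (i1 + 3)"
      "crn c Q1 i1 = b"
      using step(2) unfolding yz rot_rel_def flags_at_def by auto
    have "i2 \<noteq> 1" "i2 \<noteq> 3"
      using black_crn_iff[OF rot(1), of i2] rot(3) b(2) by auto
    then have "midpoint_potential u (ccw_end c Q2 i2) = midpoint_potential u (ccw_start c Q2 i2)"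
      using midpoint_potential_edge[OF periods rot(1,2)] by simp
    moreover have "ccw_end c Q2 i2 = ccw_start c Q1 i1"
      using rot by (auto simp: ccw_start_def ccw_end_def)
    ultimately show ?case
      using step(3) unfolding yz by simp
  qed simp
qed

theorem exact_if_cycle_periods_vanish:
  assumes periods: "\<forall>ch. X_cycle F c ch \<longrightarrow> face_pairing F 1 3 ch u = 0"
  shows "\<exists>\<psi>. \<forall>Q\<in>F. u Q = \<psi> (c Q 2) - \<psi> (c Q 0)"
proof -
  define \<psi> where "\<psi> b = (let x = SOME x. x \<in> flags_at F c b in
    midpoint_potential u (ccw_start c (fst x) (snd x)))" for b
  have \<psi>: "midpoint_potential u (ccw_start c Q i) = \<psi> (c Q i)" if "Q \<in> F" "i = 0 \<or> i = 2" for Q i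
  proof -
    have flag: "(Q, i) \<in> flags_at F c (c Q i)"
      using that by (auto simp: flags_at_def)
    then have "(SOME x. x \<in> flags_at F c (c Q i)) \<in> flags_at F c (c Q i)"
      by (rule someI)
    moreover have "c Q i \<in> V" "black (c Q i)"
      using that corner_in_V corner_colours by auto
    ultimately show ?thesis
      unfolding \<psi>_def Let_def using midpoint_potential_around_black_vertex[OF periods _ _ _ flag] by simp
  qed
  have "u Q = \<psi> (c Q 2) - \<psi> (c Q 0)" if Q: "Q \<in> F" for Q
  proof -
    have "ccw_end c Q 1 = ccw_start c Q 2" "ccw_start c Q 1 = ccw_end c Q 0"
      by (simp_all add: ccw_start_def ccw_end_def insert_commute)
    with midpoint_potential_edge[OF periods Q, of 1] midpoint_potential_edge[OF periods Q, of 0]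
    show ?thesis
      using \<psi>[OF Q, of 0] \<psi>[OF Q, of 2] by simp
  qed
  then show ?thesis by blast
qed

corollary sum_mult_divergence_free_eq_0:
  assumes "\<forall>ch. X_cycle F c ch \<longrightarrow> face_pairing F 1 3 ch u = 0" "divergence_free V F c 2 0 w"
  shows "(\<Sum>Q\<in>F. u Q * w Q) = 0"
proof -
  obtain \<psi> where "\<forall>Q\<in>F. u Q = \<psi> (c Q 2) - \<psi> (c Q 0)"
    using exact_if_cycle_periods_vanish[OF assms(1)] by blast
  then have "(\<Sum>Q\<in>F. u Q * w Q) = (\<Sum>Q\<in>F. (\<psi> (c Q 2) - \<psi> (c Q 0)) * w Q)"
    by simp
  also have "\<dots> = 0"
    using sum_gradient_divergence_free[OF assms(2)] by simp
  finally show ?thesis .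
qed

end

section \<open>Riemann bilinear relation and uniqueness\<close>

text \<open>The black and white coefficients of a discrete holomorphic differential
  (\<open>disc_holo_diff_coeffs\<close>); the uniqueness and reality arguments only need these.\<close>

definition holomorphic_coeffs ::
  "'v set \<Rightarrow> 'f set \<Rightarrow> ('f \<Rightarrow> nat \<Rightarrow> 'v) \<Rightarrow> ('f \<Rightarrow> complex) \<Rightarrow> ('f \<Rightarrow> complex) \<Rightarrow> ('f \<Rightarrow> complex) \<Rightarrow> bool"
  where
  "holomorphic_coeffs V F c rho d w \<longleftrightarrow>
     divergence_free V F c 1 3 d \<and> divergence_free V F c 2 0 w \<and> (\<forall>Q\<in>F. w Q = \<i> * rho Q * d Q)"

lemma holomorphic_coeffs_diff:
  assumes "holomorphic_coeffs V F c rho d1 w1" "holomorphic_coeffs V F c rho d2 w2"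
  shows "holomorphic_coeffs V F c rho (\<lambda>Q. d1 Q - d2 Q) (\<lambda>Q. w1 Q - w2 Q)"
  using assms by (simp add: holomorphic_coeffs_def divergence_free_diff algebra_simps)

lemma holomorphic_coeffs_cnj:
  assumes "holomorphic_coeffs V F c rho d w" "\<forall>Q\<in>F. rho Q \<in> \<real>"
  shows "holomorphic_coeffs V F c rho (\<lambda>Q. s * cnj (d Q)) (\<lambda>Q. - s * cnj (w Q))"
proof -
  have "- s * cnj (w Q) = \<i> * rho Q * (s * cnj (d Q))" if "Q \<in> F" for Q
  proof -
    have "cnj (rho Q) = rho Q"
      using assms(2) that by (simp add: Reals_cnj_iff)
    then show ?thesis
      using assms(1) that by (simp add: holomorphic_coeffs_def)
  qed
  moreover have "divergence_free V F c 1 3 (\<lambda>Q. s * cnj (d Q))"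
    "divergence_free V F c 2 0 (\<lambda>Q. - s * cnj (w Q))"
    using assms(1) divergence_free_scale[OF divergence_free_cnj, of V F c 1 3 d s]
      divergence_free_scale[OF divergence_free_cnj, of V F c 2 0 w "- s"]
    unfolding holomorphic_coeffs_def by auto
  ultimately show ?thesis
    unfolding holomorphic_coeffs_def by blast
qed

context quad_decomposition
begin

abbreviation black_period :: "'f xedge list \<Rightarrow> ('f \<Rightarrow> complex) \<Rightarrow> complex" where
  "black_period P u \<equiv> face_pairing F 1 3 (path_chain P) u"

abbreviation white_period :: "'f xedge list \<Rightarrow> ('f \<Rightarrow> complex) \<Rightarrow> complex" where
  "white_period P u \<equiv> face_pairing F 2 0 (path_chain P) u"

lemma disc_holo_diff_coeffs:
  assumes "disc_holo_diff V F c rho \<omega>"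
  shows "holomorphic_coeffs V F c rho (black_coeff \<omega>) (white_coeff \<omega>)"
  using assms closed_form_black_divergence_free closed_form_white_divergence_free
    white_coeff_holomorphic[OF assms]
  unfolding holomorphic_coeffs_def disc_holo_diff_def by blast

end

locale quad_decomposition_with_basis = quad_decomposition V F c black
  for V :: "'v set" and F :: "'f set" and c :: "'f \<Rightarrow> nat \<Rightarrow> 'v" and black :: "'v \<Rightarrow> bool" +
  fixes g :: nat and \<alpha> \<beta> :: "nat \<Rightarrow> 'f xedge list"
  assumes basis: "symplectic_X_basis F c black g \<alpha> \<beta>"
begin

lemma basis_paths_in_faces:
  "k < g \<Longrightarrow> \<forall>(Q, i, s)\<in>set (\<alpha> k). Q \<in> F \<and> i < 4"
  "k < g \<Longrightarrow> \<forall>(Q, i, s)\<in>set (\<beta> k). Q \<in> F \<and> i < 4"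
  using basis unfolding symplectic_X_basis_def closed_X_path_def by blast+

lemma basis_cycles: "k < g \<Longrightarrow> X_cycle F c (path_chain (\<alpha> k))" "k < g \<Longrightarrow> X_cycle F c (path_chain (\<beta> k))"
  using basis closed_X_path_cycle unfolding symplectic_X_basis_def by blast+

lemma basis_int_num:
  assumes "j < g" "k < g"
  shows "int_num F c black (path_chain (\<alpha> j)) (path_chain (\<alpha> k)) = 0"
    "int_num F c black (path_chain (\<beta> j)) (path_chain (\<beta> k)) = 0"
    "int_num F c black (path_chain (\<alpha> j)) (path_chain (\<beta> k)) = of_bool (j = k)"
    "int_num F c black (path_chain (\<beta> j)) (path_chain (\<alpha> k)) = - of_bool (j = k)"
proof -
  have "\<forall>j<g. \<forall>k<g. int_num F c black (path_chain (\<alpha> j)) (path_chain (\<alpha> k)) = 0 \<and>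
      int_num F c black (path_chain (\<beta> j)) (path_chain (\<beta> k)) = 0 \<and>
      int_num F c black (path_chain (\<alpha> j)) (path_chain (\<beta> k)) = of_bool (j = k)"
    using basis unfolding symplectic_X_basis_def by auto
  with assms show "int_num F c black (path_chain (\<alpha> j)) (path_chain (\<alpha> k)) = 0"
    "int_num F c black (path_chain (\<beta> j)) (path_chain (\<beta> k)) = 0"
    "int_num F c black (path_chain (\<alpha> j)) (path_chain (\<beta> k)) = of_bool (j = k)"
    "int_num F c black (path_chain (\<beta> j)) (path_chain (\<alpha> k)) = - of_bool (j = k)"
    using int_num_antisym[OF basis_cycles(2)[OF assms(1)] basis_cycles(1)[OF assms(2)]] by auto
qed

lemma face_pairing_lincomb:
  "face_pairing F p q (lincomb g \<alpha> \<beta> m n) u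
    = (\<Sum>k<g. of_int (m k) * face_pairing F p q (path_chain (\<alpha> k)) u
        + of_int (n k) * face_pairing F p q (path_chain (\<beta> k)) u)"
proof -
  have "face_pairing F p q (lincomb g \<alpha> \<beta> m n) u
      = (\<Sum>Q\<in>F. \<Sum>k<g. of_int (m k) * (of_int (path_chain (\<alpha> k) Q p - path_chain (\<alpha> k) Q q) * u Q)
          + of_int (n k) * (of_int (path_chain (\<beta> k) Q p - path_chain (\<beta> k) Q q) * u Q))"
    unfolding face_pairing_def lincomb_def of_int_diff of_int_sum sum_subtractf[symmetric]
      sum_distrib_right
    by (intro sum.cong refl) (simp add: algebra_simps)
  also have "\<dots> = (\<Sum>k<g. of_int (m k) * face_pairing F p q (path_chain (\<alpha> k)) u
        + of_int (n k) * face_pairing F p q (path_chain (\<beta> k)) u)"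
    unfolding face_pairing_def sum_distrib_left sum.distrib by (simp add: sum.swap[of _ F])
  finally show ?thesis .
qed

lemma cycle_periods_vanish:
  assumes "divergence_free V F c 1 3 u"
    and "\<forall>j<g. black_period (\<alpha> j) u = 0 \<and> black_period (\<beta> j) u = 0"
  shows "\<forall>ch. X_cycle F c ch \<longrightarrow> face_pairing F 1 3 ch u = 0"
proof (intro allI impI)
  fix ch assume "X_cycle F c ch"
  then obtain m n where "homologous F c ch (lincomb g \<alpha> \<beta> m n)"
    using basis unfolding symplectic_X_basis_def by blast
  then have "face_pairing F 1 3 ch u = face_pairing F 1 3 (lincomb g \<alpha> \<beta> m n) u"
    using face_pairing_homologous[OF assms(1)] by simp
  also have "\<dots> = 0"
    using assms(2) by (simp add: face_pairing_lincomb)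
  finally show "face_pairing F 1 3 ch u = 0" .
qed

lemma black_period_basis_duals:
  assumes "j < g" "k < g"
  shows "black_period (\<alpha> j) (cycle_dual (path_chain (\<beta> k))) = of_bool (k = j)"
    "black_period (\<alpha> j) (cycle_dual (path_chain (\<alpha> k))) = 0"
    "black_period (\<beta> j) (cycle_dual (path_chain (\<beta> k))) = 0"
    "black_period (\<beta> j) (cycle_dual (path_chain (\<alpha> k))) = - of_bool (k = j)"
  using basis_int_num[OF assms(2,1)] by (simp_all add: face_pairing_cycle_dual del: One_nat_def)

text \<open>Subtracting from \<open>d\<close> the duals of the basis cycles, weighted by its periods, leaves a
  face function with vanishing periods, which is exact by \<open>exact_if_cycle_periods_vanish\<close>.\<close>

theorem riemann_bilinear:
  assumes d: "divergence_free V F c 1 3 d" and w: "divergence_free V F c 2 0 w"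
  shows "(\<Sum>Q\<in>F. d Q * w Q)
    = (\<Sum>k<g. black_period (\<alpha> k) d * white_period (\<beta> k) w - black_period (\<beta> k) d * white_period (\<alpha> k) w)"
proof -
  let ?A = "\<lambda>k. black_period (\<alpha> k) d" and ?B = "\<lambda>k. black_period (\<beta> k) d"
  define u where "u = (\<lambda>Q. d Q - (\<Sum>k<g. ?A k * cycle_dual (path_chain (\<beta> k)) Q)
      + (\<Sum>k<g. ?B k * cycle_dual (path_chain (\<alpha> k)) Q))"
  have "divergence_free V F c 1 3 u"
    unfolding u_def
    using basis_cycles cycle_dual_divergence_free
    by (intro divergence_free_add divergence_free_diff d divergence_free_sum divergence_free_scale) auto
  moreover have "black_period (\<alpha> j) u = 0 \<and> black_period (\<beta> j) u = 0" if j: "j < g" for j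
    using j black_period_basis_duals[OF j]
    unfolding u_def face_pairing_add face_pairing_diff face_pairing_sum face_pairing_scale
    by (simp add: sum_negf del: One_nat_def)
  ultimately have "(\<Sum>Q\<in>F. u Q * w Q) = 0"
    using sum_mult_divergence_free_eq_0[OF cycle_periods_vanish w] by blast
  moreover have "(\<Sum>Q\<in>F. u Q * w Q) = (\<Sum>Q\<in>F. d Q * w Q)
      - (\<Sum>k<g. ?A k * white_period (\<beta> k) w) + (\<Sum>k<g. ?B k * white_period (\<alpha> k) w)"
  proof -
    have dual_sum: "(\<Sum>Q\<in>F. (\<Sum>k<g. a k * cycle_dual (path_chain (\<gamma> k)) Q) * w Q)
        = (\<Sum>k<g. a k * white_period (\<gamma> k) w)" for a :: "nat \<Rightarrow> complex" and \<gamma>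
    proof -
      have "(\<Sum>Q\<in>F. (\<Sum>k<g. a k * cycle_dual (path_chain (\<gamma> k)) Q) * w Q)
          = (\<Sum>k<g. \<Sum>Q\<in>F. a k * (cycle_dual (path_chain (\<gamma> k)) Q * w Q))"
        unfolding sum_distrib_right by (subst sum.swap) (simp add: mult.assoc)
      then show ?thesis
        by (simp add: sum_distrib_left[symmetric] face_pairing_def cycle_dual_def)
    qed
    show ?thesis
      unfolding u_def ring_distribs sum.distrib sum_subtractf dual_sum ..
  qed
  ultimately show ?thesis
    by (simp add: sum_subtractf algebra_simps)
qed

lemma holomorphic_coeffs_zero_if_a_periods_vanish:
  assumes hol: "holomorphic_coeffs V F c rho d w" and pos: "\<forall>Q\<in>F. Re (rho Q) > 0"
    and a_periods: "\<forall>j<g. black_period (\<alpha> j) d = 0 \<and> white_period (\<alpha> j) w = 0"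
  shows "\<forall>Q\<in>F. d Q = 0"
proof -
  have d: "divergence_free V F c 1 3 d" and w: "divergence_free V F c 2 0 w"
    and rel: "\<forall>Q\<in>F. w Q = \<i> * rho Q * d Q"
    using hol by (auto simp: holomorphic_coeffs_def)
  have "(\<Sum>Q\<in>F. d Q * cnj (w Q)) = 0"
    using a_periods by (simp add: riemann_bilinear[OF d divergence_free_cnj[OF w]] face_pairing_cnj)
  moreover have "(\<Sum>Q\<in>F. d Q * cnj (w Q)) = - \<i> * (\<Sum>Q\<in>F. cnj (rho Q) * (d Q * cnj (d Q)))"
    by (simp add: rel sum_distrib_left algebra_simps)
  ultimately have "(\<Sum>Q\<in>F. cnj (rho Q) * (d Q * cnj (d Q))) = 0"
    by simp
  then have "Re (\<Sum>Q\<in>F. cnj (rho Q) * of_real ((cmod (d Q))\<^sup>2)) = 0"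
    unfolding complex_norm_square by simp
  then have "(\<Sum>Q\<in>F. Re (rho Q) * (cmod (d Q))\<^sup>2) = 0"
    by (simp add: Re_sum)
  then have "\<forall>Q\<in>F. Re (rho Q) * (cmod (d Q))\<^sup>2 = 0"
    using pos by (subst sum_nonneg_eq_0_iff[OF finite_F, symmetric]) (auto intro: less_imp_le)
  with pos show ?thesis
    by (metis less_irrefl mult_eq_0_iff norm_eq_zero power_eq_0_iff)
qed

corollary b_periods_determined:
  assumes "holomorphic_coeffs V F c rho d1 w1" "holomorphic_coeffs V F c rho d2 w2"
    and "\<forall>Q\<in>F. Re (rho Q) > 0"
    and "\<forall>j<g. black_period (\<alpha> j) d1 = black_period (\<alpha> j) d2 \<and> white_period (\<alpha> j) w1 = white_period (\<alpha> j) w2"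
  shows "black_period P d1 = black_period P d2 \<and> white_period P w1 = white_period P w2"
proof -
  have hol: "holomorphic_coeffs V F c rho (\<lambda>Q. d1 Q - d2 Q) (\<lambda>Q. w1 Q - w2 Q)"
    using holomorphic_coeffs_diff[OF assms(1,2)] .
  moreover have "\<forall>j<g. black_period (\<alpha> j) (\<lambda>Q. d1 Q - d2 Q) = 0 \<and> white_period (\<alpha> j) (\<lambda>Q. w1 Q - w2 Q) = 0"
    using assms(4) by (simp add: face_pairing_diff del: One_nat_def)
  ultimately have "\<forall>Q\<in>F. d1 Q - d2 Q = 0"
    by (rule holomorphic_coeffs_zero_if_a_periods_vanish[OF _ assms(3)])
  moreover from this hol have "\<forall>Q\<in>F. w1 Q - w2 Q = 0"
    by (simp add: holomorphic_coeffs_def)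
  ultimately show ?thesis
    by (simp add: face_pairing_def)
qed

lemma holomorphic_periods_symmetric:
  assumes "holomorphic_coeffs V F c rho d1 w1" "holomorphic_coeffs V F c rho d2 w2"
  shows "(\<Sum>k<g. black_period (\<alpha> k) d1 * white_period (\<beta> k) w2 - black_period (\<beta> k) d1 * white_period (\<alpha> k) w2)
    = (\<Sum>k<g. black_period (\<alpha> k) d2 * white_period (\<beta> k) w1 - black_period (\<beta> k) d2 * white_period (\<alpha> k) w1)"
proof -
  have "(\<Sum>Q\<in>F. d1 Q * w2 Q) = (\<Sum>Q\<in>F. d2 Q * w1 Q)"
    using assms by (intro sum.cong refl) (simp add: holomorphic_coeffs_def)
  then show ?thesis
    using assms unfolding holomorphic_coeffs_def by (simp only: riemann_bilinear)
qed

lemma periods_conj_symmetric: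
  assumes hol: "holomorphic_coeffs V F c rho d w" and real: "\<forall>Q\<in>F. rho Q \<in> \<real>"
    and pos: "\<forall>Q\<in>F. Re (rho Q) > 0"
    and a_periods: "\<forall>j<g. s * cnj (black_period (\<alpha> j) d) = black_period (\<alpha> j) d \<and>
      - s * cnj (white_period (\<alpha> j) w) = white_period (\<alpha> j) w"
  shows "s * cnj (black_period P d) = black_period P d \<and> - s * cnj (white_period P w) = white_period P w"
proof -
  have "black_period P (\<lambda>Q. s * cnj (d Q)) = black_period P d \<and>
    white_period P (\<lambda>Q. - s * cnj (w Q)) = white_period P w"
    using a_periods
    by (intro b_periods_determined[OF holomorphic_coeffs_cnj[OF hol real] hol pos])
      (simp add: face_pairing_scale face_pairing_uminus face_pairing_cnj del: One_nat_def)
  then show ?thesis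
    by (simp add: face_pairing_scale face_pairing_uminus face_pairing_cnj del: One_nat_def)
qed

end

section \<open>The antiholomorphic involution\<close>

text \<open>\<open>tau\<close> maps corner \<open>i\<close> of \<open>Q\<close> to corner \<open>reflect_index k i\<close> of the image face,
  for a shift \<open>k\<close> depending on \<open>Q\<close>.\<close>

definition reflect_index :: "nat \<Rightarrow> nat \<Rightarrow> nat" where
  "reflect_index k i = (k + 4 - i) mod 4"

lemma reflect_index_less: "reflect_index k i < 4"
  by (simp add: reflect_index_def)

lemma reflect_index_numeral [simp]:
  "reflect_index 0 0 = 0" "reflect_index 0 1 = 3" "reflect_index 0 2 = 2" "reflect_index 0 3 = 1"
  "reflect_index 1 0 = 1" "reflect_index 1 1 = 0" "reflect_index 1 2 = 3" "reflect_index 1 3 = 2"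
  "reflect_index 2 0 = 2" "reflect_index 2 1 = 1" "reflect_index 2 2 = 0" "reflect_index 2 3 = 3"
  "reflect_index 3 0 = 3" "reflect_index 3 1 = 2" "reflect_index 3 2 = 1" "reflect_index 3 3 = 0"
  by (simp_all add: reflect_index_def)

lemma reflect_index_eq_iff:
  assumes "k < 4" "i < 4" "j < 4"
  shows "reflect_index k i = j \<longleftrightarrow> i = reflect_index k j"
  using assms unfolding less_4_cases by (elim disjE; simp add: reflect_index_def)

lemma sum_reflect_index:
  assumes "k < 4"
  shows "(\<Sum>i<4. f (reflect_index k i)) = (\<Sum>j<4. f j :: 'a::comm_monoid_add)"
  using assms unfolding less_4_cases sum_lessThan_4
  by (elim disjE; hypsubst; simp only: reflect_index_numeral; simp add: ac_simps)

lemma reflect_index_image: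
  assumes "k < 4"
  shows "reflect_index k ` {..<4} = {..<4}"
proof
  show "reflect_index k ` {..<4} \<subseteq> {..<4}"
    using reflect_index_less by auto
  show "{..<4} \<subseteq> reflect_index k ` {..<4}"
  proof
    fix j assume j: "j \<in> {..<4::nat}"
    then have "reflect_index k (reflect_index k j) = j"
      using reflect_index_eq_iff[OF assms reflect_index_less] by simp
    then show "j \<in> reflect_index k ` {..<4}"
      using reflect_index_less by (metis image_eqI lessThan_iff)
  qed
qed

locale quad_decomposition_with_involution = quad_decomposition V F c black
  for V :: "'v set" and F :: "'f set" and c :: "'f \<Rightarrow> nat \<Rightarrow> 'v" and black :: "'v \<Rightarrow> bool" +
  fixes rho :: "'f \<Rightarrow> complex" and tau :: "'v \<Rightarrow> 'v"
  assumes involution: "antihol_involution V F c black rho tau"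
begin

lemma tau_in_V: "v \<in> V \<Longrightarrow> tau v \<in> V" and tau_tau: "v \<in> V \<Longrightarrow> tau (tau v) = v"
  using involution unfolding antihol_involution_def by auto

lemma tau_inj: "u \<in> V \<Longrightarrow> v \<in> V \<Longrightarrow> tau u = tau v \<Longrightarrow> u = v"
  using tau_tau by metis

definition face_correspondence :: "'f \<Rightarrow> 'f \<times> nat" where
  "face_correspondence Q =
     (SOME p. fst p \<in> F \<and> snd p < 4 \<and> (\<forall>i<4. tau (crn c Q i) = crn c (fst p) (snd p + 4 - i)))"

definition tau_face :: "'f \<Rightarrow> 'f" where
  "tau_face Q = fst (face_correspondence Q)"

definition tau_shift :: "'f \<Rightarrow> nat" where
  "tau_shift Q = snd (face_correspondence Q)"

lemma
  assumes "Q \<in> F"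
  shows tau_face_in_F: "tau_face Q \<in> F"
    and tau_shift_less: "tau_shift Q < 4"
    and tau_corner: "i < 4 \<Longrightarrow> tau (c Q i) = c (tau_face Q) (reflect_index (tau_shift Q) i)"
proof -
  obtain Q' k where "Q' \<in> F" "k < 4" "\<forall>i<4. tau (crn c Q i) = crn c Q' (k + 4 - i)"
    using involution assms unfolding antihol_involution_def by blast
  then have "\<exists>p. fst p \<in> F \<and> snd p < 4 \<and> (\<forall>i<4. tau (crn c Q i) = crn c (fst p) (snd p + 4 - i))"
    by (intro exI[of _ "(Q', k)"]) simp
  from someI_ex[OF this] have corr: "tau_face Q \<in> F" "tau_shift Q < 4"
    "\<forall>i<4. tau (crn c Q i) = crn c (tau_face Q) (tau_shift Q + 4 - i)"
    unfolding tau_face_def tau_shift_def face_correspondence_def by blast+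
  then show "tau_face Q \<in> F" "tau_shift Q < 4"
    by simp_all
  show "tau (c Q i) = c (tau_face Q) (reflect_index (tau_shift Q) i)" if "i < 4"
    using corr(3) that by (simp add: crn_def reflect_index_def)
qed

lemma corners_eq_image: "corners c Q = c Q ` {..<4}"
  unfolding corners_def crn_def by (intro image_cong refl) simp

lemma tau_image_corners:
  assumes "Q \<in> F"
  shows "tau ` corners c Q = corners c (tau_face Q)"
proof -
  have "tau ` corners c Q = (\<lambda>i. c (tau_face Q) (reflect_index (tau_shift Q) i)) ` {..<4}"
    unfolding corners_eq_image image_image using tau_corner[OF assms] by (intro image_cong refl) simp
  also have "\<dots> = c (tau_face Q) ` (reflect_index (tau_shift Q) ` {..<4})"
    by (simp add: image_image)
  also have "\<dots> = corners c (tau_face Q)"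
    unfolding corners_eq_image reflect_index_image[OF tau_shift_less[OF assms]] ..
  finally show ?thesis .
qed

lemma corners_inj:
  assumes "Q1 \<in> F" "Q2 \<in> F" "corners c Q1 = corners c Q2"
  shows "Q1 = Q2"
proof (rule ccontr)
  assume "Q1 \<noteq> Q2"
  then have "corners c Q1 \<inter> corners c Q2 = {} \<or> (\<exists>v. corners c Q1 \<inter> corners c Q2 = {v}) \<or>
      (\<exists>i<4. corners c Q1 \<inter> corners c Q2 = {crn c Q1 i, crn c Q1 (Suc i)})"
    using quad_surface assms(1,2) unfolding quad_surface_def by blast
  moreover have "card {x, y} \<le> 2" for x y :: 'v
    by (cases "x = y") auto
  ultimately have "card (corners c Q1 \<inter> corners c Q2) \<le> 2"
    by (elim disjE exE conjE) auto
  moreover have "card (corners c Q1) = 4"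
    unfolding corners_eq_image using card_image[OF inj_on_corners[OF assms(1)]] by simp
  ultimately show False
    using assms(3) by simp
qed

lemma tau_image_corners_iff:
  assumes "Q1 \<in> F" "Q \<in> F"
  shows "tau ` corners c Q1 = corners c (tau_face Q) \<longleftrightarrow> Q1 = Q"
proof
  assume "tau ` corners c Q1 = corners c (tau_face Q)"
  then have "tau ` corners c Q1 = tau ` corners c Q"
    using tau_image_corners assms by simp
  then have "tau ` tau ` corners c Q1 = tau ` tau ` corners c Q"
    by simp
  moreover have "tau ` tau ` corners c Q' = corners c Q'" if "Q' \<in> F" for Q'
    using that corner_in_V tau_tau unfolding corners_eq_image by (force simp: image_image)
  ultimately show "Q1 = Q"
    using assms corners_inj by metis
qed (use tau_image_corners assms in simp)

lemma inj_on_tau_face: "inj_on tau_face F"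
proof (rule inj_onI)
  fix Q1 Q2 assume "Q1 \<in> F" "Q2 \<in> F" "tau_face Q1 = tau_face Q2"
  then show "Q1 = Q2"
    using tau_image_corners_iff tau_image_corners by metis
qed

lemma sum_tau_face: "(\<Sum>Q\<in>F. f (tau_face Q)) = (\<Sum>Q\<in>F. f Q)"
proof -
  have "tau_face ` F = F"
    using endo_inj_surj[OF finite_F _ inj_on_tau_face] tau_face_in_F by blast
  then show ?thesis
    using sum.reindex[OF inj_on_tau_face, of f] by simp
qed

lemma tau_push_apply:
  assumes Q: "Q \<in> F" and j: "j < 4"
  shows "tau_push F c tau ch (tau_face Q) j = - ch Q (reflect_index (tau_shift Q) j)"
proof -
  let ?k = "tau_shift Q"
  have "tau (crn c Q i) = crn c (tau_face Q) j \<longleftrightarrow> i = reflect_index ?k j" if i: "i < 4" for i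
  proof -
    have "c (tau_face Q) (reflect_index ?k i) = c (tau_face Q) j \<longleftrightarrow> reflect_index ?k i = j"
      using inj_on_corners[OF tau_face_in_F[OF Q]] reflect_index_less j
      unfolding inj_on_def by (metis lessThan_iff)
    then show ?thesis
      using tau_corner[OF Q i] reflect_index_eq_iff[OF tau_shift_less[OF Q] i j] i j by (simp add: crn_eq)
  qed
  then have "(\<Sum>Q1\<in>F. \<Sum>i<4. if tau ` corners c Q1 = corners c (tau_face Q) \<and>
        tau (crn c Q1 i) = crn c (tau_face Q) j then ch Q1 i else 0)
      = (\<Sum>Q1\<in>F. if Q1 = Q then (\<Sum>i<4. if i = reflect_index ?k j then ch Q i else 0) else 0)"
    using tau_image_corners_iff[OF _ Q] by (intro sum.cong refl) auto
  also have "\<dots> = ch Q (reflect_index ?k j)"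
    using Q reflect_index_less by (simp add: finite_F)
  finally show ?thesis
    unfolding tau_push_def by simp
qed

lemma tau_shift_type1:
  assumes "Q \<in> F" "is_type1 V F c black rho tau"
  shows "tau_shift Q = 0 \<or> tau_shift Q = 2"
proof -
  have "tau (c Q 0) = c (tau_face Q) (tau_shift Q)"
    using tau_corner[OF assms(1), of 0] tau_shift_less[OF assms(1)] by (simp add: reflect_index_def)
  moreover have "black (tau (c Q 0))"
    using assms corner_in_V[OF assms(1)] corner_colours[OF assms(1)] unfolding is_type1_def by auto
  ultimately show ?thesis
    using tau_shift_less[OF assms(1)] corner_colours[OF tau_face_in_F[OF assms(1)]]
    unfolding less_4_cases by auto
qed

lemma tau_shift_type2:
  assumes "Q \<in> F" "is_type2 V F c black rho tau"
  shows "tau_shift Q = 1 \<or> tau_shift Q = 3"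
proof -
  have "tau (c Q 0) = c (tau_face Q) (tau_shift Q)"
    using tau_corner[OF assms(1), of 0] tau_shift_less[OF assms(1)] by (simp add: reflect_index_def)
  moreover have "\<not> black (tau (c Q 0))"
    using assms corner_in_V[OF assms(1)] corner_colours[OF assms(1)] unfolding is_type2_def by auto
  ultimately show ?thesis
    using tau_shift_less[OF assms(1)] corner_colours[OF tau_face_in_F[OF assms(1)]]
    unfolding less_4_cases by auto
qed

lemma rho_tau_face_type1: "Q \<in> F \<Longrightarrow> is_type1 V F c black rho tau \<Longrightarrow> rho (tau_face Q) = cnj (rho Q)"
  using tau_image_corners tau_face_in_F unfolding is_type1_def by blast

lemma rho_tau_face_type2: "Q \<in> F \<Longrightarrow> is_type2 V F c black rho tau \<Longrightarrow> rho (tau_face Q) = 1 / cnj (rho Q)"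
  using tau_image_corners tau_face_in_F unfolding is_type2_def by blast

text \<open>The pull-back \<open>\<tau>\<^sup>* \<omega>\<close>, conjugated so that it is again holomorphic; the sign accounts for the
  reversal of orientation.\<close>

definition reflected_form :: "('f \<Rightarrow> nat \<Rightarrow> complex) \<Rightarrow> 'f \<Rightarrow> nat \<Rightarrow> complex" where
  "reflected_form \<omega> Q i = - cnj (\<omega> (tau_face Q) (reflect_index (tau_shift Q) i))"

lemma type_diamond_reflected_form:
  assumes "type_diamond F \<omega>"
  shows "type_diamond F (reflected_form \<omega>)"
  unfolding type_diamond_def
proof
  fix Q assume Q: "Q \<in> F"
  have "\<omega> (tau_face Q) 1 = - \<omega> (tau_face Q) 3" "\<omega> (tau_face Q) 2 = - \<omega> (tau_face Q) 0"
    using assms tau_face_in_F[OF Q] unfolding type_diamond_def by auto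
  then show "reflected_form \<omega> Q 1 = - reflected_form \<omega> Q 3 \<and> reflected_form \<omega> Q 2 = - reflected_form \<omega> Q 0"
    using tau_shift_less[OF Q] unfolding reflected_form_def less_4_cases
    by (elim disjE; simp only: reflect_index_numeral; simp)
qed

lemma reflected_form_vertex_sum:
  assumes "v \<in> V"
  shows "(\<Sum>Q\<in>F. \<Sum>i<4. if crn c Q i = v then reflected_form \<omega> Q i else 0)
    = - cnj (\<Sum>Q\<in>F. \<Sum>j<4. if crn c Q j = tau v then \<omega> Q j else 0)"
proof -
  let ?k = tau_shift and ?\<sigma> = tau_face
  let ?f = "\<lambda>Q j. if c (?\<sigma> Q) j = tau v then - cnj (\<omega> (?\<sigma> Q) j) else 0"
  have "(\<Sum>Q\<in>F. \<Sum>i<4. if crn c Q i = v then reflected_form \<omega> Q i else 0)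
      = (\<Sum>Q\<in>F. \<Sum>i<4. ?f Q (reflect_index (?k Q) i))"
  proof (intro sum.cong refl)
    fix Q i assume Q: "Q \<in> F" and i: "i \<in> {..<4::nat}"
    then have "crn c Q i = v \<longleftrightarrow> tau (c Q i) = tau v"
      using tau_inj corner_in_V assms by (auto simp: crn_eq)
    then show "(if crn c Q i = v then reflected_form \<omega> Q i else 0) = ?f Q (reflect_index (?k Q) i)"
      using tau_corner[OF Q] i unfolding reflected_form_def by auto
  qed
  also have "\<dots> = (\<Sum>Q\<in>F. \<Sum>j<4. ?f Q j)"
    by (rule sum.cong[OF refl]) (rule sum_reflect_index, erule tau_shift_less)
  also have "\<dots> = (\<Sum>Q\<in>F. \<Sum>j<4. if c Q j = tau v then - cnj (\<omega> Q j) else 0)"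
    by (rule sum_tau_face)
  also have "\<dots> = - cnj (\<Sum>Q\<in>F. \<Sum>j<4. if crn c Q j = tau v then \<omega> Q j else 0)"
    unfolding cnj_sum sum_negf[symmetric] by (intro sum.cong refl) (auto simp: crn_eq)
  finally show ?thesis .
qed

lemma closed_form_reflected_form:
  assumes "closed_form V F c \<omega>"
  shows "closed_form V F c (reflected_form \<omega>)"
  unfolding closed_form_def
proof (intro conjI ballI)
  fix Q assume Q: "Q \<in> F"
  have "(\<Sum>i<4. reflected_form \<omega> Q i) = - cnj (\<Sum>i<4. \<omega> (tau_face Q) (reflect_index (tau_shift Q) i))"
    unfolding reflected_form_def cnj_sum sum_negf ..
  also have "\<dots> = - cnj (\<Sum>i<4. \<omega> (tau_face Q) i)"
    using sum_reflect_index[OF tau_shift_less[OF Q]] by simp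
  also have "\<dots> = 0"
    using assms tau_face_in_F[OF Q] unfolding closed_form_def by simp
  finally show "(\<Sum>i<4. reflected_form \<omega> Q i) = 0" .
next
  fix v assume "v \<in> V"
  with assms show "(\<Sum>Q\<in>F. \<Sum>i<4. if crn c Q i = v then reflected_form \<omega> Q i else 0) = 0"
    unfolding reflected_form_vertex_sum[OF \<open>v \<in> V\<close>] using tau_in_V by (simp add: closed_form_def)
qed

lemma reflected_form_holomorphic:
  assumes "type_diamond F \<omega>" "\<forall>Q\<in>F. white_coeff \<omega> Q = \<i> * rho Q * black_coeff \<omega> Q"
    and "\<forall>Q\<in>F. rho Q \<noteq> 0"
  shows "\<forall>Q\<in>F. white_coeff (reflected_form \<omega>) Q = \<i> * rho Q * black_coeff (reflected_form \<omega>) Q"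
proof
  fix Q assume Q: "Q \<in> F"
  let ?Q' = "tau_face Q"
  have Q': "?Q' \<in> F" using tau_face_in_F[OF Q] .
  have diamond: "\<omega> ?Q' 3 = - \<omega> ?Q' 1" "\<omega> ?Q' 0 = - \<omega> ?Q' 2"
    using assms(1) Q' unfolding type_diamond_def by auto
  have holo: "\<omega> ?Q' 2 = \<i> * rho ?Q' * \<omega> ?Q' 1"
    using assms(2) Q' unfolding black_coeff_def white_coeff_def by auto
  show "white_coeff (reflected_form \<omega>) Q = \<i> * rho Q * black_coeff (reflected_form \<omega>) Q"
  proof (cases "is_type1 V F c black rho tau")
    case True
    then show ?thesis
      using tau_shift_type1[OF Q True] rho_tau_face_type1[OF Q True]
      unfolding black_coeff_def white_coeff_def reflected_form_def
      by (elim disjE; simp only: reflect_index_numeral; simp add: diamond holo algebra_simps)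
  next
    case False
    then have type2: "is_type2 V F c black rho tau"
      using involution unfolding antihol_involution_def by blast
    have "rho Q * cnj (rho (tau_face Q)) = 1"
      using rho_tau_face_type2[OF Q type2] assms(3) Q by simp
    then show ?thesis
      using tau_shift_type2[OF Q type2]
      unfolding black_coeff_def white_coeff_def reflected_form_def
      by (elim disjE; simp only: reflect_index_numeral; simp add: diamond holo field_simps)
  qed
qed

lemma face_pairing_tau_push:
  assumes "p < 4" "q < 4"
  shows "face_pairing F p q (tau_push F c tau ch) u
    = (\<Sum>Q\<in>F. of_int (ch Q (reflect_index (tau_shift Q) q) - ch Q (reflect_index (tau_shift Q) p))
        * u (tau_face Q))"
  unfolding face_pairing_def
    sum_tau_face[symmetric, of "\<lambda>Q. of_int (tau_push F c tau ch Q p - tau_push F c tau ch Q q) * u Q"]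
  using assms by (intro sum.cong refl) (simp add: tau_push_apply)

lemma periods_reflected_form_type1:
  assumes "type_diamond F \<omega>" "is_type1 V F c black rho tau"
  shows "face_pairing F 1 3 ch (black_coeff (reflected_form \<omega>))
      = cnj (face_pairing F 1 3 (tau_push F c tau ch) (black_coeff \<omega>))"
    "face_pairing F 2 0 ch (white_coeff (reflected_form \<omega>))
      = cnj (face_pairing F 2 0 (tau_push F c tau ch) (white_coeff \<omega>))"
proof -
  have diamond: "\<omega> (tau_face Q) 3 = - \<omega> (tau_face Q) 1" "\<omega> (tau_face Q) 0 = - \<omega> (tau_face Q) 2"
    if "Q \<in> F" for Q
    using assms(1) tau_face_in_F[OF that] unfolding type_diamond_def by auto
  have pull: "face_pairing F 1 3 (tau_push F c tau ch) u = (\<Sum>Q\<in>F.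
      of_int (ch Q (reflect_index (tau_shift Q) 3) - ch Q (reflect_index (tau_shift Q) 1)) * u (tau_face Q))"
    "face_pairing F 2 0 (tau_push F c tau ch) u = (\<Sum>Q\<in>F.
      of_int (ch Q (reflect_index (tau_shift Q) 0) - ch Q (reflect_index (tau_shift Q) 2)) * u (tau_face Q))"
    for u by (rule face_pairing_tau_push; simp)+
  show "face_pairing F 1 3 ch (black_coeff (reflected_form \<omega>))
      = cnj (face_pairing F 1 3 (tau_push F c tau ch) (black_coeff \<omega>))"
    unfolding pull unfolding face_pairing_def cnj_sum
  proof (rule sum.cong[OF refl])
    fix Q assume Q: "Q \<in> F"
    show "of_int (ch Q 1 - ch Q 3) * black_coeff (reflected_form \<omega>) Q
        = cnj (of_int (ch Q (reflect_index (tau_shift Q) 3) - ch Q (reflect_index (tau_shift Q) 1))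
            * black_coeff \<omega> (tau_face Q))"
      using tau_shift_type1[OF Q assms(2)] diamond[OF Q]
      unfolding black_coeff_def white_coeff_def reflected_form_def
      by (elim disjE; simp only: reflect_index_numeral; simp add: algebra_simps)
  qed
  show "face_pairing F 2 0 ch (white_coeff (reflected_form \<omega>))
      = cnj (face_pairing F 2 0 (tau_push F c tau ch) (white_coeff \<omega>))"
    unfolding pull unfolding face_pairing_def cnj_sum
  proof (rule sum.cong[OF refl])
    fix Q assume Q: "Q \<in> F"
    show "of_int (ch Q 2 - ch Q 0) * white_coeff (reflected_form \<omega>) Q
        = cnj (of_int (ch Q (reflect_index (tau_shift Q) 0) - ch Q (reflect_index (tau_shift Q) 2))
            * white_coeff \<omega> (tau_face Q))"
      using tau_shift_type1[OF Q assms(2)] diamond[OF Q]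
      unfolding black_coeff_def white_coeff_def reflected_form_def
      by (elim disjE; simp only: reflect_index_numeral; simp add: algebra_simps)
  qed
qed

lemma periods_reflected_form_type2:
  assumes "type_diamond F \<omega>" "is_type2 V F c black rho tau"
  shows "face_pairing F 1 3 ch (black_coeff (reflected_form \<omega>))
      = cnj (face_pairing F 2 0 (tau_push F c tau ch) (white_coeff \<omega>))"
    "face_pairing F 2 0 ch (white_coeff (reflected_form \<omega>))
      = cnj (face_pairing F 1 3 (tau_push F c tau ch) (black_coeff \<omega>))"
proof -
  have diamond: "\<omega> (tau_face Q) 3 = - \<omega> (tau_face Q) 1" "\<omega> (tau_face Q) 0 = - \<omega> (tau_face Q) 2"
    if "Q \<in> F" for Q
    using assms(1) tau_face_in_F[OF that] unfolding type_diamond_def by auto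
  have pull: "face_pairing F 1 3 (tau_push F c tau ch) u = (\<Sum>Q\<in>F.
      of_int (ch Q (reflect_index (tau_shift Q) 3) - ch Q (reflect_index (tau_shift Q) 1)) * u (tau_face Q))"
    "face_pairing F 2 0 (tau_push F c tau ch) u = (\<Sum>Q\<in>F.
      of_int (ch Q (reflect_index (tau_shift Q) 0) - ch Q (reflect_index (tau_shift Q) 2)) * u (tau_face Q))"
    for u by (rule face_pairing_tau_push; simp)+
  show "face_pairing F 1 3 ch (black_coeff (reflected_form \<omega>))
      = cnj (face_pairing F 2 0 (tau_push F c tau ch) (white_coeff \<omega>))"
    unfolding pull unfolding face_pairing_def cnj_sum
  proof (rule sum.cong[OF refl])
    fix Q assume Q: "Q \<in> F"
    show "of_int (ch Q 1 - ch Q 3) * black_coeff (reflected_form \<omega>) Q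
        = cnj (of_int (ch Q (reflect_index (tau_shift Q) 0) - ch Q (reflect_index (tau_shift Q) 2))
            * white_coeff \<omega> (tau_face Q))"
      using tau_shift_type2[OF Q assms(2)] diamond[OF Q]
      unfolding black_coeff_def white_coeff_def reflected_form_def
      by (elim disjE; simp only: reflect_index_numeral; simp add: algebra_simps)
  qed
  show "face_pairing F 2 0 ch (white_coeff (reflected_form \<omega>))
      = cnj (face_pairing F 1 3 (tau_push F c tau ch) (black_coeff \<omega>))"
    unfolding pull unfolding face_pairing_def cnj_sum
  proof (rule sum.cong[OF refl])
    fix Q assume Q: "Q \<in> F"
    show "of_int (ch Q 2 - ch Q 0) * white_coeff (reflected_form \<omega>) Q
        = cnj (of_int (ch Q (reflect_index (tau_shift Q) 3) - ch Q (reflect_index (tau_shift Q) 1))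
            * black_coeff \<omega> (tau_face Q))"
      using tau_shift_type2[OF Q assms(2)] diamond[OF Q]
      unfolding black_coeff_def white_coeff_def reflected_form_def
      by (elim disjE; simp only: reflect_index_numeral; simp add: algebra_simps)
  qed
qed

lemma holomorphic_coeffs_reflected_form:
  assumes "disc_holo_diff V F c rho \<omega>" "\<forall>Q\<in>F. rho Q \<noteq> 0"
  shows "holomorphic_coeffs V F c rho (black_coeff (reflected_form \<omega>)) (white_coeff (reflected_form \<omega>))"
proof -
  have "type_diamond F \<omega>" "closed_form V F c \<omega>"
    using assms(1) by (simp_all add: disc_holo_diff_def)
  moreover have "\<forall>Q\<in>F. white_coeff \<omega> Q = \<i> * rho Q * black_coeff \<omega> Q"
    using white_coeff_holomorphic[OF assms(1)] by blast
  ultimately show ?thesis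
    unfolding holomorphic_coeffs_def
    using closed_form_black_divergence_free closed_form_white_divergence_free
      type_diamond_reflected_form closed_form_reflected_form reflected_form_holomorphic assms(2)
    by blast
qed

end

section \<open>Period matrices\<close>

locale real_quad_surface_with_basis =
  quad_decomposition_with_basis V F c black g \<alpha> \<beta> +
  quad_decomposition_with_involution V F c black rho tau
  for V :: "'v set" and F :: "'f set" and c :: "'f \<Rightarrow> nat \<Rightarrow> 'v" and black :: "'v \<Rightarrow> bool"
    and g :: nat and \<alpha> \<beta> :: "nat \<Rightarrow> 'f xedge list" and rho :: "'f \<Rightarrow> complex" and tau :: "'v \<Rightarrow> 'v" +
  assumes pos: "\<forall>Q\<in>F. Re (rho Q) > 0"
    and tau_a: "\<forall>k<g. homologous F c (tau_push F c tau (path_chain (\<alpha> k))) (path_chain (\<alpha> k))"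
    and tau_b: "\<forall>k<g. homologous F c (tau_push F c tau (path_chain (\<beta> k))) (\<lambda>Q i. - path_chain (\<beta> k) Q i)"
begin

lemma tau_push_periods:
  assumes "divergence_free V F c p q u" "p < 4" "q < 4" "j < g"
  shows "face_pairing F p q (tau_push F c tau (path_chain (\<alpha> j))) u
      = face_pairing F p q (path_chain (\<alpha> j)) u"
    "face_pairing F p q (tau_push F c tau (path_chain (\<beta> j))) u
      = - face_pairing F p q (path_chain (\<beta> j)) u"
  using face_pairing_homologous[OF assms(1) tau_a[rule_format, OF assms(4)] assms(2,3)]
    face_pairing_homologous[OF assms(1) tau_b[rule_format, OF assms(4)] assms(2,3)]
  by (simp_all add: face_pairing_uminus_chain)

lemma b_periods_type1:
  assumes type1: "is_type1 V F c black rho tau" and hol: "disc_holo_diff V F c rho \<omega>"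
    and a_real: "\<forall>j<g. cnj (black_period (\<alpha> j) (black_coeff \<omega>)) = black_period (\<alpha> j) (black_coeff \<omega>) \<and>
      cnj (white_period (\<alpha> j) (white_coeff \<omega>)) = white_period (\<alpha> j) (white_coeff \<omega>)"
    and "j < g"
  shows "black_period (\<beta> j) (black_coeff \<omega>) = - cnj (black_period (\<beta> j) (black_coeff \<omega>)) \<and>
    white_period (\<beta> j) (white_coeff \<omega>) = - cnj (white_period (\<beta> j) (white_coeff \<omega>))"
proof -
  have coeffs: "holomorphic_coeffs V F c rho (black_coeff \<omega>) (white_coeff \<omega>)"
    using disc_holo_diff_coeffs[OF hol] .
  have diamond: "type_diamond F \<omega>"
    using hol by (simp add: disc_holo_diff_def)
  have div: "divergence_free V F c 1 3 (black_coeff \<omega>)" "divergence_free V F c 2 0 (white_coeff \<omega>)"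
    using coeffs by (simp_all add: holomorphic_coeffs_def)
  have "\<forall>Q\<in>F. rho Q \<noteq> 0"
    using pos by auto
  note reflected = holomorphic_coeffs_reflected_form[OF hol this]
  have same: "black_period P (black_coeff (reflected_form \<omega>)) = black_period P (black_coeff \<omega>) \<and>
    white_period P (white_coeff (reflected_form \<omega>)) = white_period P (white_coeff \<omega>)" for P
    using a_real tau_push_periods(1)[OF div(1)] tau_push_periods(1)[OF div(2)]
    by (intro b_periods_determined[OF reflected coeffs pos])
      (simp add: periods_reflected_form_type1[OF diamond type1] del: One_nat_def)
  show ?thesis
    using same[of "\<beta> j"] tau_push_periods(2)[OF div(1) _ _ assms(4)]
      tau_push_periods(2)[OF div(2) _ _ assms(4)]
    by (simp add: periods_reflected_form_type1[OF diamond type1] del: One_nat_def)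
qed

lemma b_periods_type2:
  assumes type2: "is_type2 V F c black rho tau"
    and hol1: "disc_holo_diff V F c rho \<omega>1" and hol2: "disc_holo_diff V F c rho \<omega>2"
    and a_periods: "\<forall>j<g. cnj (white_period (\<alpha> j) (white_coeff \<omega>1)) = black_period (\<alpha> j) (black_coeff \<omega>2) \<and>
      cnj (black_period (\<alpha> j) (black_coeff \<omega>1)) = white_period (\<alpha> j) (white_coeff \<omega>2)"
    and "j < g"
  shows "- cnj (white_period (\<beta> j) (white_coeff \<omega>1)) = black_period (\<beta> j) (black_coeff \<omega>2) \<and>
    - cnj (black_period (\<beta> j) (black_coeff \<omega>1)) = white_period (\<beta> j) (white_coeff \<omega>2)"
proof -
  have coeffs: "holomorphic_coeffs V F c rho (black_coeff \<omega>2) (white_coeff \<omega>2)"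
    using disc_holo_diff_coeffs[OF hol2] .
  have diamond: "type_diamond F \<omega>1"
    using hol1 by (simp add: disc_holo_diff_def)
  have div: "divergence_free V F c 1 3 (black_coeff \<omega>1)" "divergence_free V F c 2 0 (white_coeff \<omega>1)"
    using disc_holo_diff_coeffs[OF hol1] by (simp_all add: holomorphic_coeffs_def)
  have "\<forall>Q\<in>F. rho Q \<noteq> 0"
    using pos by auto
  note reflected = holomorphic_coeffs_reflected_form[OF hol1 this]
  have same: "black_period P (black_coeff (reflected_form \<omega>1)) = black_period P (black_coeff \<omega>2) \<and>
    white_period P (white_coeff (reflected_form \<omega>1)) = white_period P (white_coeff \<omega>2)" for P
    using a_periods tau_push_periods(1)[OF div(1)] tau_push_periods(1)[OF div(2)]
    by (intro b_periods_determined[OF reflected coeffs pos])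
      (simp add: periods_reflected_form_type2[OF diamond type2] del: One_nat_def)
  show ?thesis
    using same[of "\<beta> j"] tau_push_periods(2)[OF div(1) _ _ assms(5)]
      tau_push_periods(2)[OF div(2) _ _ assms(5)]
    by (simp add: periods_reflected_form_type2[OF diamond type2] del: One_nat_def)
qed

end

locale normalized_differentials = real_quad_surface_with_basis V F c black g \<alpha> \<beta> rho tau
  for V :: "'v set" and F :: "'f set" and c :: "'f \<Rightarrow> nat \<Rightarrow> 'v" and black :: "'v \<Rightarrow> bool"
    and g :: nat and \<alpha> \<beta> :: "nat \<Rightarrow> 'f xedge list" and rho :: "'f \<Rightarrow> complex" and tau :: "'v \<Rightarrow> 'v" +
  fixes \<omega>B \<omega>W :: "nat \<Rightarrow> 'f \<Rightarrow> nat \<Rightarrow> complex"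
  assumes orth: "orthodiagonal F rho"
    and omB: "\<forall>k<g. disc_holo_diff V F c rho (\<omega>B k) \<and>
                (\<forall>j<g. bper c black (\<alpha> j) (\<omega>B k) = (if j = k then 1 else 0) \<and>
                       wper c black (\<alpha> j) (\<omega>B k) = 0)"
    and omW: "\<forall>k<g. disc_holo_diff V F c rho (\<omega>W k) \<and>
                (\<forall>j<g. wper c black (\<alpha> j) (\<omega>W k) = (if j = k then 1 else 0) \<and>
                       bper c black (\<alpha> j) (\<omega>W k) = 0)"
begin

abbreviation "\<Pi>BB j k \<equiv> black_period (\<beta> j) (black_coeff (\<omega>B k))"
abbreviation "\<Pi>WB j k \<equiv> white_period (\<beta> j) (white_coeff (\<omega>B k))"
abbreviation "\<Pi>BW j k \<equiv> black_period (\<beta> j) (black_coeff (\<omega>W k))"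
abbreviation "\<Pi>WW j k \<equiv> white_period (\<beta> j) (white_coeff (\<omega>W k))"

lemma holomorphic_normalized:
  "k < g \<Longrightarrow> disc_holo_diff V F c rho (\<omega>B k)" "k < g \<Longrightarrow> disc_holo_diff V F c rho (\<omega>W k)"
  using omB omW by blast+

lemma periods_eq_face_pairing:
  assumes "j < g" "k < g"
  shows "bper c black (\<alpha> j) (\<omega>B k) = black_period (\<alpha> j) (black_coeff (\<omega>B k))"
    "wper c black (\<alpha> j) (\<omega>B k) = white_period (\<alpha> j) (white_coeff (\<omega>B k))"
    "bper c black (\<alpha> j) (\<omega>W k) = black_period (\<alpha> j) (black_coeff (\<omega>W k))"
    "wper c black (\<alpha> j) (\<omega>W k) = white_period (\<alpha> j) (white_coeff (\<omega>W k))"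
    "bper c black (\<beta> j) (\<omega>B k) = \<Pi>BB j k" "wper c black (\<beta> j) (\<omega>B k) = \<Pi>WB j k"
    "bper c black (\<beta> j) (\<omega>W k) = \<Pi>BW j k" "wper c black (\<beta> j) (\<omega>W k) = \<Pi>WW j k"
  using holomorphic_normalized[OF assms(2)] basis_paths_in_faces[OF assms(1)]
  by (simp_all add: disc_holo_diff_def bper_eq_face_pairing wper_eq_face_pairing del: One_nat_def)

lemma a_periods_normalized:
  assumes "j < g" "k < g"
  shows "black_period (\<alpha> j) (black_coeff (\<omega>B k)) = (if j = k then 1 else 0)"
    "white_period (\<alpha> j) (white_coeff (\<omega>B k)) = 0"
    "black_period (\<alpha> j) (black_coeff (\<omega>W k)) = 0"
    "white_period (\<alpha> j) (white_coeff (\<omega>W k)) = (if j = k then 1 else 0)"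
  using omB omW assms periods_eq_face_pairing[OF assms] by auto

lemma b_periods_conj:
  assumes "j < g" "k < g"
  shows "cnj (\<Pi>BB j k) = \<Pi>BB j k" "- cnj (\<Pi>WB j k) = \<Pi>WB j k"
    "- cnj (\<Pi>BW j k) = \<Pi>BW j k" "cnj (\<Pi>WW j k) = \<Pi>WW j k"
proof -
  have real: "\<forall>Q\<in>F. rho Q \<in> \<real>"
    using orth by (simp add: orthodiagonal_def)
  show "cnj (\<Pi>BB j k) = \<Pi>BB j k" "- cnj (\<Pi>WB j k) = \<Pi>WB j k"
    using periods_conj_symmetric[OF disc_holo_diff_coeffs[OF holomorphic_normalized(1)[OF assms(2)]]
        real pos, of 1 "\<beta> j"] a_periods_normalized[OF _ assms(2)]
    by (simp_all del: One_nat_def)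
  show "- cnj (\<Pi>BW j k) = \<Pi>BW j k" "cnj (\<Pi>WW j k) = \<Pi>WW j k"
    using periods_conj_symmetric[OF disc_holo_diff_coeffs[OF holomorphic_normalized(2)[OF assms(2)]]
        real pos, of "-1" "\<beta> j"] a_periods_normalized[OF _ assms(2)]
    by (simp_all del: One_nat_def)
qed

lemma b_periods_symmetry:
  assumes "j < g" "k < g"
  shows "\<Pi>WW j k = \<Pi>BB k j" "\<Pi>BW j k = \<Pi>BW k j"
proof -
  note coeffs = disc_holo_diff_coeffs[OF holomorphic_normalized(1)]
    disc_holo_diff_coeffs[OF holomorphic_normalized(2)]
  show "\<Pi>WW j k = \<Pi>BB k j"
    using holomorphic_periods_symmetric[OF coeffs(1)[OF assms(1)] coeffs(2)[OF assms(2)]] assms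
    by (simp add: a_periods_normalized sum_subtractf if_distrib[of "\<lambda>x. x * _"]
        if_distrib[of "\<lambda>x. _ * x"] del: One_nat_def cong: if_cong)
  show "\<Pi>BW j k = \<Pi>BW k j"
    using holomorphic_periods_symmetric[OF coeffs(2)[OF assms(1)] coeffs(2)[OF assms(2)]] assms
    by (simp add: a_periods_normalized sum_negf if_distrib[of "\<lambda>x. x * _"]
        if_distrib[of "\<lambda>x. _ * x"] del: One_nat_def cong: if_cong)
qed

theorem periods_type1:
  assumes "is_type1 V F c black rho tau" "j < g" "k < g"
  shows "bper c black (\<beta> j) (\<omega>B k) = 0 \<and> wper c black (\<beta> j) (\<omega>W k) = 0 \<and>
    Re (bper c black (\<beta> j) (\<omega>W k)) = 0 \<and> Re (wper c black (\<beta> j) (\<omega>B k)) = 0"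
proof -
  note conj = b_periods_conj[OF assms(2,3)]
  have "\<Pi>BB j k = - cnj (\<Pi>BB j k)" "\<Pi>WW j k = - cnj (\<Pi>WW j k)"
    using b_periods_type1[OF assms(1) holomorphic_normalized(1)[OF assms(3)] _ assms(2)]
      b_periods_type1[OF assms(1) holomorphic_normalized(2)[OF assms(3)] _ assms(2)]
      a_periods_normalized[OF _ assms(3)]
    by (simp_all del: One_nat_def)
  then have "\<Pi>BB j k = 0" "\<Pi>WW j k = 0"
    using conj(1,4) by simp_all
  moreover have "Re (\<Pi>BW j k) = 0" "Re (\<Pi>WB j k) = 0"
    using arg_cong[OF conj(3), of Re] arg_cong[OF conj(2), of Re] by simp_all
  ultimately show ?thesis
    using periods_eq_face_pairing[OF assms(2,3)] by simp
qed

theorem periods_type2: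
  assumes "is_type2 V F c black rho tau" "j < g" "k < g"
  shows "bper c black (\<beta> j) (\<omega>B k) = - wper c black (\<beta> j) (\<omega>W k) \<and>
    wper c black (\<beta> j) (\<omega>B k) = bper c black (\<beta> j) (\<omega>W k) \<and>
    bper c black (\<beta> j) (\<omega>B k) \<in> \<real> \<and>
    bper c black (\<beta> j) (\<omega>B k) = - bper c black (\<beta> k) (\<omega>B j) \<and>
    Re (wper c black (\<beta> j) (\<omega>B k)) = 0 \<and>
    wper c black (\<beta> j) (\<omega>B k) = wper c black (\<beta> k) (\<omega>B j)"
proof -
  have swap: "- cnj (\<Pi>WB j k) = \<Pi>BW j k \<and> - cnj (\<Pi>BB j k) = \<Pi>WW j k" if "j < g" "k < g" for j k
    using b_periods_type2[OF assms(1) holomorphic_normalized(1)[OF that(2)]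
        holomorphic_normalized(2)[OF that(2)] _ that(1)] a_periods_normalized[OF _ that(2)]
    by (simp del: One_nat_def)
  note conj = b_periods_conj[OF assms(2,3)] b_periods_conj[OF assms(3,2)]
  have "\<Pi>WW j k = - \<Pi>BB j k" "\<Pi>WB j k = \<Pi>BW j k"
    using swap[OF assms(2,3)] conj by auto
  moreover have "\<Pi>BB j k = - \<Pi>BB k j"
    using b_periods_symmetry(1)[OF assms(3,2)] swap[OF assms(3,2)] conj by auto
  moreover have "\<Pi>WB j k = \<Pi>WB k j"
    using b_periods_symmetry(2)[OF assms(2,3)] swap[OF assms(2,3)] swap[OF assms(3,2)] conj by auto
  moreover have "\<Pi>BB j k \<in> \<real>"
    using conj(1) by (simp add: Reals_cnj_iff)
  moreover have "Re (\<Pi>WB j k) = 0"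
    using arg_cong[OF conj(2), of Re] by simp
  ultimately show ?thesis
    using periods_eq_face_pairing[OF assms(2,3)] periods_eq_face_pairing[OF assms(3,2)] by simp
qed

end

theorem mainTheorem8:
  fixes V :: "'v set" and F :: "'f set" and c :: "'f \<Rightarrow> nat \<Rightarrow> 'v" and black :: "'v \<Rightarrow> bool"
    and rho :: "'f \<Rightarrow> complex" and tau :: "'v \<Rightarrow> 'v" and g :: nat
    and \<alpha> \<beta> :: "nat \<Rightarrow> 'f xedge list"
    and \<omega>B \<omega>W :: "nat \<Rightarrow> 'f \<Rightarrow> nat \<Rightarrow> complex"
  assumes drs: "discrete_riemann_surface V F c black rho"
    and genus: "has_genus V F c g"
    and inv: "antihol_involution V F c black rho tau"
    and orth: "orthodiagonal F rho"
    and Mcurve: "num_real_ovals V F c black rho tau = g + 1"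
    and basis: "symplectic_X_basis F c black g \<alpha> \<beta>"
    and tau_a: "\<forall>k<g. homologous F c (tau_push F c tau (path_chain (\<alpha> k))) (path_chain (\<alpha> k))"
    and tau_b: "\<forall>k<g. homologous F c (tau_push F c tau (path_chain (\<beta> k))) (\<lambda>Q i. - path_chain (\<beta> k) Q i)"
    and omB: "\<forall>k<g. disc_holo_diff V F c rho (\<omega>B k) \<and>
                (\<forall>j<g. bper c black (\<alpha> j) (\<omega>B k) = (if j = k then 1 else 0) \<and>
                       wper c black (\<alpha> j) (\<omega>B k) = 0)"
    and omW: "\<forall>k<g. disc_holo_diff V F c rho (\<omega>W k) \<and>
                (\<forall>j<g. wper c black (\<alpha> j) (\<omega>W k) = (if j = k then 1 else 0) \<and>
                       bper c black (\<alpha> j) (\<omega>W k) = 0)"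
  shows "(is_type1 V F c black rho tau \<longrightarrow>
            (\<forall>j<g. \<forall>k<g.
               bper c black (\<beta> j) (\<omega>B k) = 0 \<and> wper c black (\<beta> j) (\<omega>W k) = 0 \<and>
               Re (bper c black (\<beta> j) (\<omega>W k)) = 0 \<and> Re (wper c black (\<beta> j) (\<omega>B k)) = 0))
       \<and> (is_type2 V F c black rho tau \<longrightarrow>
            (\<forall>j<g. \<forall>k<g.
               bper c black (\<beta> j) (\<omega>B k) = - wper c black (\<beta> j) (\<omega>W k) \<and>
               wper c black (\<beta> j) (\<omega>B k) = bper c black (\<beta> j) (\<omega>W k) \<and>
               bper c black (\<beta> j) (\<omega>B k) \<in> \<real> \<and>
               bper c black (\<beta> j) (\<omega>B k) = - bper c black (\<beta> k) (\<omega>B j) \<and>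
               Re (wper c black (\<beta> j) (\<omega>B k)) = 0 \<and>
               wper c black (\<beta> j) (\<omega>B k) = wper c black (\<beta> k) (\<omega>B j)))"
proof -
  interpret normalized_differentials V F c black g \<alpha> \<beta> rho tau \<omega>B \<omega>W
    using drs basis inv tau_a tau_b orth omB omW
    by unfold_locales (auto simp: discrete_riemann_surface_def)
  show ?thesis
    using periods_type1 periods_type2 by blast
qed

end
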